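(* Let $T$ be a lifted graph, $F\colon T\to T$ a continuous sun-like map of degree 1, ${\cal P}$ a basic partition of $F$ and ${\cal G}$ its covering graph. Then $\mathrm{Rot}_{X^\infty}(F)=\mathrm{Rot}_{\Gamma({\cal G})}$. If $\gamma$ is a loop in ${\cal G}$, then $\rho(\widetilde\gamma)\in\mathbb Q$ and there exists a periodic (mod 1) point $x\in X^\infty$ with $\rho_F(x)=\rho(\widetilde\gamma)$. If $\bar\alpha\in{\cal J}$, then $\rho(\bar\alpha)\in\mathbb Q$ and there exists a periodic (mod 1) point $x\in X^\infty$ with $\rho_F(x)=\rho(\bar\alpha)$.
   Context: A lifted graph is a connected topological space $T$ with a homeomorphism $h\colon\mathbb R\to h(\mathbb R)\subset T$ and a homeomorphism $\tau\colon T\to T$ such that $\tau(h(x))=h(x+1)$, the closure of each connected component of $T\setminus h(\mathbb R)$ is a topological finite graph meeting $h(\mathbb R)$ in exactly one point, and only finitely many such components have closure meeting $h([0,1])$. Identify $h(\mathbb R)$ with $\mathbb R$, write $x+m:=\tau^m(x)$; $r_{\mathbb R}\colon T\to\mathbb R$ is the identity on $\mathbb R$ and maps a component $C$ of $T\setminus\mathbb R$ to the point $\overline C\cap\mathbb R$. $F$ has degree 1 if $F(x+1)=F(x)+1$; $x$ is periodic (mod 1) if $F^n(x)\in x+\mathbb Z$ for some $n\ge1$; $\rho_F(x):=\lim_n\frac{r_{\mathbb R}(F^n(x))-r_{\mathbb R}(x)}{n}$ when it exists; $\mathrm{Rot}_E(F)$ is the set of existing $\rho_F(x)$, $x\in E$.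 Let $T_{\mathbb R}:=\overline{\bigcup_{n\ge0}F^n(\mathbb R)}$, $X:=\overline{T\setminus T_{\mathbb R}}\cap r_{\mathbb R}^{-1}([0,1))$. $F$ is sun-like if $(T\setminus T_{\mathbb R})\cap r_{\mathbb R}^{-1}([0,1))$ consists of finitely many intervals with pairwise disjoint closures $X^i$, $i\in\Lambda$ (branches), each a compact interval meeting $T_{\mathbb R}$ in one endpoint $\min X^i$ (fixing the order of $X^i$). $X^\infty:=\{x\in X:F^n(x)\in X+\mathbb Z\ \forall n\ge0\}$. A basic partition is a finite family ${\cal P}=\{X^i_j\}$ of pairwise disjoint nonempty compact intervals $X^i_1<\dots<X^i_{N_i}$ in $X^i$, with $\ell(X^i_j)\in\Lambda$, $p(X^i_j)\in\mathbb Z$, such that $F(X^i_j)\subset(X^{\ell(X^i_j)}+p(X^i_j))\cup\mathrm{Int}(T_{\mathbb R})$, $F(\min X^i_j)=\min X^{\ell(X^i_j)}+p(X^i_j)$, and $F(X\setminus\bigcup X^i_j)\cap(X+\mathbb Z)=\emptyset$. For $A_0,\dots,A_n\in{\cal P}$, $\langle A_0\dots A_n\rangle:=F^n(\{x\in T: F^i(x)\in A_i+\mathbb Z,\ 0\le i\le n\})\cap X$. $A_0\dots A_n\sim B_0\dots B_m$ iff for some $k\le\min(n,m)$, $A_{n-i}=B_{m-i}$ ($0\le i\le k$) and $\langle A_0\dots A_{n-k}\rangle=A_{n-k}=B_{m-k}=\langle B_0\dots B_{m-k}\rangle$. The covering graph ${\cal G}$: vertices are classes $A_0\dots A_n/\!\sim$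 with $\langle A_0\dots A_n\rangle\ne\emptyset$; arrow $\alpha\to\beta$ iff $\alpha=A_0\dots A_n/\!\sim$, $\beta=A_0\dots A_nA_{n+1}/\!\sim$ for some $A_i\in{\cal P}$. Vertices $A/\!\sim$, $A\in{\cal P}$, are identified with ${\cal P}$. Weight $W(\alpha\beta):=p(A)$, $A\in{\cal P}$ the unique element containing $\langle\alpha\rangle$; weight of a finite path is the sum of the weights of its arrows; loops are paths with equal endpoints; $\widetilde\gamma$ is the infinite repetition of a loop $\gamma$; $\rho(\bar\alpha):=\lim_n\frac1nW(\alpha_0\dots\alpha_n)$ for an infinite path $\bar\alpha=(\alpha_n)$; $\mathrm{Rot}_{\Gamma({\cal G})}$ is the set of existing $\rho(\bar\alpha)$ over infinite paths. ${\cal J}$ is the set of infinite paths $(\alpha_n)_{n\ge0}$ in ${\cal G}$ for which there exists $N\ge0$ such that for all $n\ge N$ there is no arrow $\alpha_n\to B$ with $B\in{\cal P}$. *)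

theory Defs
  imports "HOL-Analysis.Analysis"
begin

definition topological_finite_graph :: "'a topology \<Rightarrow> bool" where
  "topological_finite_graph G \<longleftrightarrow>
     compact_space G \<and> connected_space G \<and> metrizable_space G \<and>
     (\<exists>V E. finite V \<and> V \<subseteq> topspace G \<and> finite E \<and> pairwise disjnt E \<and>
        \<Union>E = topspace G - V \<and>
        (\<forall>e\<in>E. openin G e \<and>
           (subtopology G e) homeomorphic_space (top_of_set {0<..<(1::real)}) \<and>
           G frontier_of e \<subseteq> V))"

definition lifted_graph :: "'a topology \<Rightarrow> (real \<Rightarrow> 'a) \<Rightarrow> ('a \<Rightarrow> 'a) \<Rightarrow> bool" where
  "lifted_graph T h \<tau> \<longleftrightarrow>
     connected_space T \<and>
     range h \<subseteq> topspace T \<and>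
     homeomorphic_map euclideanreal (subtopology T (range h)) h \<and>
     homeomorphic_map T T \<tau> \<and>
     (\<forall>x. \<tau> (h x) = h (x + 1)) \<and>
     (\<forall>C\<in>connected_components_of (subtopology T (topspace T - range h)).
        topological_finite_graph (subtopology T (T closure_of C)) \<and>
        (\<exists>!y. y \<in> T closure_of C \<inter> range h)) \<and>
     finite {C\<in>connected_components_of (subtopology T (topspace T - range h)).
               T closure_of C \<inter> h ` {0..1} \<noteq> {}}"

text \<open>Integer translations x + m := tau^m(x).\<close>
definition zsh :: "'a topology \<Rightarrow> ('a \<Rightarrow> 'a) \<Rightarrow> int \<Rightarrow> 'a \<Rightarrow> 'a" where
  "zsh T \<tau> m = (if 0 \<le> m then \<tau> ^^ nat m else (inv_into (topspace T) \<tau>) ^^ nat (- m))"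

definition zsh_set :: "'a topology \<Rightarrow> ('a \<Rightarrow> 'a) \<Rightarrow> 'a set \<Rightarrow> 'a set" where
  "zsh_set T \<tau> S = {zsh T \<tau> m x | m x. x \<in> S}"

text \<open>The retraction r_R : T \<rightarrow> R (with range h identified with R).\<close>
definition rR :: "'a topology \<Rightarrow> (real \<Rightarrow> 'a) \<Rightarrow> 'a \<Rightarrow> real" where
  "rR T h y = (if y \<in> range h then inv h y
     else (THE x. h x \<in> T closure_of
              (connected_component_of_set (subtopology T (topspace T - range h)) y)))"

definition degree_one :: "'a topology \<Rightarrow> ('a \<Rightarrow> 'a) \<Rightarrow> ('a \<Rightarrow> 'a) \<Rightarrow> bool" where
  "degree_one T \<tau> F \<longleftrightarrow> (\<forall>x\<in>topspace T. F (\<tau> x) = \<tau> (F x))"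

definition periodic_mod1 :: "'a topology \<Rightarrow> ('a \<Rightarrow> 'a) \<Rightarrow> ('a \<Rightarrow> 'a) \<Rightarrow> 'a \<Rightarrow> bool" where
  "periodic_mod1 T \<tau> F x \<longleftrightarrow> (\<exists>n\<ge>1. \<exists>m::int. (F ^^ n) x = zsh T \<tau> m x)"

definition has_rot :: "'a topology \<Rightarrow> (real \<Rightarrow> 'a) \<Rightarrow> ('a \<Rightarrow> 'a) \<Rightarrow> 'a \<Rightarrow> real \<Rightarrow> bool" where
  "has_rot T h F x r \<longleftrightarrow> (\<lambda>n. (rR T h ((F ^^ n) x) - rR T h x) / real n) \<longlonglongrightarrow> r"

definition Rot :: "'a topology \<Rightarrow> (real \<Rightarrow> 'a) \<Rightarrow> ('a \<Rightarrow> 'a) \<Rightarrow> 'a set \<Rightarrow> real set" where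
  "Rot T h F E = {r. \<exists>x\<in>E. has_rot T h F x r}"

definition TR :: "'a topology \<Rightarrow> (real \<Rightarrow> 'a) \<Rightarrow> ('a \<Rightarrow> 'a) \<Rightarrow> 'a set" where
  "TR T h F = T closure_of (\<Union>n. (F ^^ n) ` range h)"

definition Xset :: "'a topology \<Rightarrow> (real \<Rightarrow> 'a) \<Rightarrow> ('a \<Rightarrow> 'a) \<Rightarrow> 'a set" where
  "Xset T h F = T closure_of (topspace T - TR T h F) \<inter> {y. rR T h y \<in> {0..<1}}"

text \<open>Sun-like, with the branches given as X^i = phi i ` [0,1], where phi i is a
homeomorphism of [0,1] onto X^i with phi i 0 = min X^i the point of X^i in T_R; the order on X^i
is the one transported by phi i.\<close>
definition sun_like :: "'a topology \<Rightarrow> (real \<Rightarrow> 'a) \<Rightarrow> ('a \<Rightarrow> 'a) \<Rightarrow> 'i set \<Rightarrow> ('i \<Rightarrow> real \<Rightarrow> 'a) \<Rightarrow> bool" where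
  "sun_like T h F \<Lambda> \<phi> \<longleftrightarrow>
     finite \<Lambda> \<and>
     (\<forall>i\<in>\<Lambda>. homeomorphic_map (top_of_set {0..1}) (subtopology T (\<phi> i ` {0..1})) (\<phi> i) \<and>
              \<phi> i ` {0..1} \<inter> TR T h F = {\<phi> i 0} \<and>
              T closure_of (\<phi> i ` {0<..1}) = \<phi> i ` {0..1}) \<and>
     (\<forall>i\<in>\<Lambda>. \<forall>j\<in>\<Lambda>. i \<noteq> j \<longrightarrow> disjnt (\<phi> i ` {0..1}) (\<phi> j ` {0..1})) \<and>
     (topspace T - TR T h F) \<inter> {y. rR T h y \<in> {0..<1}} = (\<Union>i\<in>\<Lambda>. \<phi> i ` {0<..1})"

definition Xinf :: "'a topology \<Rightarrow> (real \<Rightarrow> 'a) \<Rightarrow> ('a \<Rightarrow> 'a) \<Rightarrow> ('a \<Rightarrow> 'a) \<Rightarrow> 'a set" where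
  "Xinf T h \<tau> F = {x\<in>Xset T h F. \<forall>n. (F ^^ n) x \<in> zsh_set T \<tau> (Xset T h F)}"

definition pmin :: "'i set \<Rightarrow> ('i \<Rightarrow> real \<Rightarrow> 'a) \<Rightarrow> 'a set \<Rightarrow> 'a" where
  "pmin \<Lambda> \<phi> A = (THE y. \<exists>i\<in>\<Lambda>. \<exists>a b. 0 \<le> a \<and> a \<le> b \<and> b \<le> 1 \<and> A = \<phi> i ` {a..b} \<and> y = \<phi> i a)"

definition basic_partition :: "'a topology \<Rightarrow> (real \<Rightarrow> 'a) \<Rightarrow> ('a \<Rightarrow> 'a) \<Rightarrow> ('a \<Rightarrow> 'a) \<Rightarrow>
     'i set \<Rightarrow> ('i \<Rightarrow> real \<Rightarrow> 'a) \<Rightarrow> 'a set set \<Rightarrow> ('a set \<Rightarrow> 'i) \<Rightarrow> ('a set \<Rightarrow> int) \<Rightarrow> bool" where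
  "basic_partition T h \<tau> F \<Lambda> \<phi> P lab p \<longleftrightarrow>
     finite P \<and> pairwise disjnt P \<and>
     (\<forall>A\<in>P. \<exists>i\<in>\<Lambda>. \<exists>a b. 0 \<le> a \<and> a \<le> b \<and> b \<le> 1 \<and> A = \<phi> i ` {a..b}) \<and>
     (\<forall>A\<in>P. lab A \<in> \<Lambda> \<and>
        F ` A \<subseteq> (zsh T \<tau> (p A) ` \<phi> (lab A) ` {0..1}) \<union> T interior_of TR T h F \<and>
        F (pmin \<Lambda> \<phi> A) = zsh T \<tau> (p A) (\<phi> (lab A) 0)) \<and>
     F ` (Xset T h F - \<Union>P) \<inter> zsh_set T \<tau> (Xset T h F) = {}"

definition words :: "'a set set \<Rightarrow> 'a set list set" where
  "words P = {w. w \<noteq> [] \<and> set w \<subseteq> P}"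

definition cyl :: "'a topology \<Rightarrow> (real \<Rightarrow> 'a) \<Rightarrow> ('a \<Rightarrow> 'a) \<Rightarrow> ('a \<Rightarrow> 'a) \<Rightarrow> 'a set list \<Rightarrow> 'a set" where
  "cyl T h \<tau> F w = (F ^^ (length w - 1)) `
       {x\<in>topspace T. \<forall>i<length w. (F ^^ i) x \<in> zsh_set T \<tau> (w ! i)} \<inter> Xset T h F"

text \<open>The defining relation of \<sim> (n = length w - 1, m = length v - 1).\<close>
definition simrel :: "'a topology \<Rightarrow> (real \<Rightarrow> 'a) \<Rightarrow> ('a \<Rightarrow> 'a) \<Rightarrow> ('a \<Rightarrow> 'a) \<Rightarrow> 'a set list \<Rightarrow> 'a set list \<Rightarrow> bool" where
  "simrel T h \<tau> F w v \<longleftrightarrow>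
     (\<exists>k\<le>min (length w - 1) (length v - 1).
        (\<forall>i\<le>k. w ! (length w - 1 - i) = v ! (length v - 1 - i)) \<and>
        cyl T h \<tau> F (take (length w - k) w) = w ! (length w - 1 - k) \<and>
        w ! (length w - 1 - k) = v ! (length v - 1 - k) \<and>
        cyl T h \<tau> F (take (length v - k) v) = v ! (length v - 1 - k))"

definition simeq :: "'a topology \<Rightarrow> (real \<Rightarrow> 'a) \<Rightarrow> ('a \<Rightarrow> 'a) \<Rightarrow> ('a \<Rightarrow> 'a) \<Rightarrow> 'a set set \<Rightarrow> 'a set list \<Rightarrow> 'a set list \<Rightarrow> bool" where
  "simeq T h \<tau> F P = equivclp (\<lambda>w v. w \<in> words P \<and> v \<in> words P \<and> simrel T h \<tau> F w v)"

definition cls :: "'a topology \<Rightarrow> (real \<Rightarrow> 'a) \<Rightarrow> ('a \<Rightarrow> 'a) \<Rightarrow> ('a \<Rightarrow> 'a) \<Rightarrow> 'a set set \<Rightarrow> 'a set list \<Rightarrow> 'a set list set" where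
  "cls T h \<tau> F P w = {v\<in>words P. simeq T h \<tau> F P w v}"

definition vertices :: "'a topology \<Rightarrow> (real \<Rightarrow> 'a) \<Rightarrow> ('a \<Rightarrow> 'a) \<Rightarrow> ('a \<Rightarrow> 'a) \<Rightarrow> 'a set set \<Rightarrow> 'a set list set set" where
  "vertices T h \<tau> F P = {cls T h \<tau> F P w | w. w \<in> words P \<and> cyl T h \<tau> F w \<noteq> {}}"

definition arrow :: "'a topology \<Rightarrow> (real \<Rightarrow> 'a) \<Rightarrow> ('a \<Rightarrow> 'a) \<Rightarrow> ('a \<Rightarrow> 'a) \<Rightarrow> 'a set set \<Rightarrow> 'a set list set \<Rightarrow> 'a set list set \<Rightarrow> bool" where
  "arrow T h \<tau> F P \<alpha> \<beta> \<longleftrightarrow> \<alpha> \<in> vertices T h \<tau> F P \<and> \<beta> \<in> vertices T h \<tau> F P \<and>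
     (\<exists>w A. w \<in> words P \<and> A \<in> P \<and> \<alpha> = cls T h \<tau> F P w \<and> \<beta> = cls T h \<tau> F P (w @ [A]))"

definition vcyl :: "'a topology \<Rightarrow> (real \<Rightarrow> 'a) \<Rightarrow> ('a \<Rightarrow> 'a) \<Rightarrow> ('a \<Rightarrow> 'a) \<Rightarrow> 'a set list set \<Rightarrow> 'a set" where
  "vcyl T h \<tau> F \<alpha> = cyl T h \<tau> F (SOME w. w \<in> \<alpha>)"

text \<open>W(alpha beta) = p(A), A in P the element containing <alpha>.\<close>
definition vweight :: "'a topology \<Rightarrow> (real \<Rightarrow> 'a) \<Rightarrow> ('a \<Rightarrow> 'a) \<Rightarrow> ('a \<Rightarrow> 'a) \<Rightarrow> 'a set set \<Rightarrow> ('a set \<Rightarrow> int) \<Rightarrow> 'a set list set \<Rightarrow> int" where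
  "vweight T h \<tau> F P p \<alpha> = p (THE A. A \<in> P \<and> vcyl T h \<tau> F \<alpha> \<subseteq> A)"

definition inf_path :: "'a topology \<Rightarrow> (real \<Rightarrow> 'a) \<Rightarrow> ('a \<Rightarrow> 'a) \<Rightarrow> ('a \<Rightarrow> 'a) \<Rightarrow> 'a set set \<Rightarrow> (nat \<Rightarrow> 'a set list set) \<Rightarrow> bool" where
  "inf_path T h \<tau> F P \<alpha> \<longleftrightarrow> (\<forall>n. arrow T h \<tau> F P (\<alpha> n) (\<alpha> (Suc n)))"

definition path_rot :: "'a topology \<Rightarrow> (real \<Rightarrow> 'a) \<Rightarrow> ('a \<Rightarrow> 'a) \<Rightarrow> ('a \<Rightarrow> 'a) \<Rightarrow> 'a set set \<Rightarrow> ('a set \<Rightarrow> int) \<Rightarrow> (nat \<Rightarrow> 'a set list set) \<Rightarrow> real \<Rightarrow> bool" where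
  "path_rot T h \<tau> F P p \<alpha> r \<longleftrightarrow>
     (\<lambda>n. real_of_int (\<Sum>k<n. vweight T h \<tau> F P p (\<alpha> k)) / real n) \<longlonglongrightarrow> r"

definition Rot_graph :: "'a topology \<Rightarrow> (real \<Rightarrow> 'a) \<Rightarrow> ('a \<Rightarrow> 'a) \<Rightarrow> ('a \<Rightarrow> 'a) \<Rightarrow> 'a set set \<Rightarrow> ('a set \<Rightarrow> int) \<Rightarrow> real set" where
  "Rot_graph T h \<tau> F P p = {r. \<exists>\<alpha>. inf_path T h \<tau> F P \<alpha> \<and> path_rot T h \<tau> F P p \<alpha> r}"

definition is_loop :: "'a topology \<Rightarrow> (real \<Rightarrow> 'a) \<Rightarrow> ('a \<Rightarrow> 'a) \<Rightarrow> ('a \<Rightarrow> 'a) \<Rightarrow> 'a set set \<Rightarrow> 'a set list set list \<Rightarrow> bool" where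
  "is_loop T h \<tau> F P \<gamma> \<longleftrightarrow> length \<gamma> \<ge> 2 \<and> hd \<gamma> = last \<gamma> \<and>
     (\<forall>i. Suc i < length \<gamma> \<longrightarrow> arrow T h \<tau> F P (\<gamma> ! i) (\<gamma> ! Suc i))"

definition loop_rep :: "'b list \<Rightarrow> nat \<Rightarrow> 'b" where
  "loop_rep \<gamma> n = \<gamma> ! (n mod (length \<gamma> - 1))"

definition Jpaths :: "'a topology \<Rightarrow> (real \<Rightarrow> 'a) \<Rightarrow> ('a \<Rightarrow> 'a) \<Rightarrow> ('a \<Rightarrow> 'a) \<Rightarrow> 'a set set \<Rightarrow> (nat \<Rightarrow> 'a set list set) set" where
  "Jpaths T h \<tau> F P = {\<alpha>. inf_path T h \<tau> F P \<alpha> \<and>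
     (\<exists>N. \<forall>n\<ge>N. \<not> (\<exists>B\<in>P. arrow T h \<tau> F P (\<alpha> n) (cls T h \<tau> F P [B])))}"

end

theory Submission
  imports Defs
begin

(*
  A point of X^inf visits at each time n a translate A_n + m_n of an element A_n of the basic
  partition; the words A_0 ... A_n form an infinite path in the covering graph whose weights add
  up to m_n, so the point and its itinerary have the same rotation number.  Conversely, following
  an arrow means applying F translated back into X, and the cylinders are compact, so the nested
  sets of points that shadow a given path have a common point, which lies in X^inf.

  Cylinders of vertices are initial segments of the partition elements.  If the elements along a
  path eventually repeat with period q (which they do along a loop, and along a path in J because
  there every next element is the first one on the branch labelled by the current one), the
  cylinders of one period form a chain of intervals each covering the next under the translated
  maps.  Pulling the closing interval back along the chain and applying the intermediate value
  theorem gives a point returning to itself modulo translation after q steps: a periodic point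
  whose rotation number is the rational average weight of the period.
*)

section \<open>Averages, compactness and fixed points\<close>

lemma bounded_over_real_tendsto_0:
  fixes c :: "nat \<Rightarrow> real"
  assumes "\<And>n. \<bar>c n\<bar> \<le> B"
  shows "(\<lambda>n. c n / real n) \<longlonglongrightarrow> 0"
proof (rule tendsto_sandwich[where f="\<lambda>n. - B / real n" and h="\<lambda>n. B / real n"])
  have lim: "(\<lambda>n. B / real n) \<longlonglongrightarrow> 0"
    by (intro tendsto_divide_0[OF tendsto_const] filterlim_at_top_imp_at_infinity
        filterlim_real_sequentially)
  then show "(\<lambda>n. B / real n) \<longlonglongrightarrow> 0" "(\<lambda>n. - B / real n) \<longlonglongrightarrow> 0"
    using tendsto_minus[OF lim] by simp_all
  have "- B \<le> c n" "c n \<le> B" for n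
    using assms[of n] by auto
  then show "\<forall>\<^sub>F n in sequentially. - B / real n \<le> c n / real n"
    "\<forall>\<^sub>F n in sequentially. c n / real n \<le> B / real n"
    by (intro always_eventually allI divide_right_mono; simp)+
qed

lemma average_tendsto_iff_bounded_diff:
  fixes a b :: "nat \<Rightarrow> real"
  assumes "\<And>n. \<bar>a n - b n\<bar> \<le> B"
  shows "(\<lambda>n. a n / real n) \<longlonglongrightarrow> r \<longleftrightarrow> (\<lambda>n. b n / real n) \<longlonglongrightarrow> r"
proof -
  have d: "(\<lambda>n. a n / real n - b n / real n) \<longlonglongrightarrow> 0"
    using bounded_over_real_tendsto_0[of "\<lambda>n. a n - b n" B] assms
    by (simp add: diff_divide_distrib)
  show ?thesis
  proof
    assume "(\<lambda>n. a n / real n) \<longlonglongrightarrow> r"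
    from tendsto_diff[OF this d] show "(\<lambda>n. b n / real n) \<longlonglongrightarrow> r" by simp
  next
    assume "(\<lambda>n. b n / real n) \<longlonglongrightarrow> r"
    from tendsto_add[OF this d] show "(\<lambda>n. a n / real n) \<longlonglongrightarrow> r" by simp
  qed
qed

lemma average_tendsto_of_bounded_deviation:
  fixes a :: "nat \<Rightarrow> real"
  assumes "\<And>n. \<bar>a n - real n * L\<bar> \<le> B"
  shows "(\<lambda>n. a n / real n) \<longlonglongrightarrow> L"
proof -
  have "(\<lambda>n. real n * L / real n) \<longlonglongrightarrow> L"
    by (rule Lim_transform_eventually[OF tendsto_const])
       (use eventually_gt_at_top[of 0] in \<open>eventually_elim, simp\<close>)
  then show ?thesis
    using average_tendsto_iff_bounded_diff[of a "\<lambda>n. real n * L", OF assms] by simp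
qed

lemma bounded_if_eventually_periodic:
  fixes c :: "nat \<Rightarrow> real"
  assumes q: "1 \<le> q" and per: "\<And>n. N \<le> n \<Longrightarrow> c (n + q) = c n"
  shows "\<exists>B. \<forall>n. \<bar>c n\<bar> \<le> B"
proof -
  have "\<bar>c n\<bar> \<le> (\<Sum>m<N + q. \<bar>c m\<bar>)" for n
  proof (induction n rule: less_induct)
    case (less n)
    show ?case
    proof (cases "n < N + q")
      case True
      then show ?thesis by (intro member_le_sum) auto
    next
      case False
      then have "N \<le> n - q" "n - q < n" "c n = c (n - q)"
        using q per[of "n - q"] by auto
      then show ?thesis using less.IH by simp
    qed
  qed
  then show ?thesis by blast
qed

lemma average_tendsto_eventually_periodic:
  fixes w :: "nat \<Rightarrow> int"
  assumes q: "1 \<le> q" and per: "\<And>n. N \<le> n \<Longrightarrow> w (n + q) = w n"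
  shows "(\<lambda>n. real_of_int (\<Sum>k<n. w k) / real n) \<longlonglongrightarrow> real_of_int (\<Sum>k<q. w (N + k)) / real q"
proof -
  define W where "W = (\<Sum>k<q. w (N + k))"
  have sum_add: "(\<Sum>k<n + m. w k) = (\<Sum>k<n. w k) + (\<Sum>k<m. w (n + k))" for n m
    by (induction m) simp_all
  have block: "(\<Sum>k<q. w (n + k)) = W" if "N \<le> n" for n
    using that
  proof (induction n rule: dec_induct)
    case base then show ?case by (simp add: W_def)
  next
    case (step n)
    have "(\<Sum>k<q. w (Suc n + k)) + w n = (\<Sum>k<Suc q. w (n + k))"
      by (subst sum.lessThan_Suc_shift) simp
    also have "\<dots> = (\<Sum>k<q. w (n + k)) + w (n + q)" by simp
    finally show ?case using per step by simp
  qed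
  define c where "c n = real_of_int (\<Sum>k<n. w k) - real n * (real_of_int W / real q)" for n
  have "c (n + q) = c n" if "N \<le> n" for n
    using q sum_add[of n q] block[OF that] by (simp add: c_def field_simps)
  then obtain B where "\<And>n. \<bar>c n\<bar> \<le> B" using bounded_if_eventually_periodic[OF q] by blast
  then show ?thesis
    using average_tendsto_of_bounded_deviation[of "\<lambda>n. real_of_int (\<Sum>k<n. w k)"
        "real_of_int W / real q" B]
    by (simp add: c_def W_def)
qed

lemma compactin_Int_decseq_nonempty:
  assumes K: "compactin X K" and C: "\<And>n. closedin X (C n)" "decseq C"
    and ne: "\<And>n. K \<inter> C n \<noteq> {}"
  shows "K \<inter> \<Inter>(range C) \<noteq> {}"
proof -
  have "K \<inter> \<Inter>\<F> \<noteq> {}" if fin: "finite \<F>" "\<F> \<subseteq> range C" for \<F>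
  proof -
    obtain N where N: "finite N" "\<F> = C ` N"
      using finite_subset_image[OF fin] by blast
    define n where "n = Max (insert 0 N)"
    have "C n \<subseteq> C m" if "m \<in> N" for m
      using C(2) N(1) that by (simp add: decseq_def n_def)
    then have "C n \<subseteq> \<Inter>\<F>" using N(2) by blast
    then show ?thesis using ne[of n] by blast
  qed
  moreover have "\<forall>U\<in>range C. closedin X U" using C(1) by blast
  ultimately show ?thesis
    using K unfolding compactin_fip by (metis (no_types, lifting))
qed

lemma continuous_on_interval_fixed_point:
  fixes f :: "real \<Rightarrow> real"
  assumes f: "continuous_on {s..t} f" and onto: "{s..t} \<subseteq> f ` {s..t}" and st: "s \<le> t"
  shows "\<exists>x\<in>{s..t}. f x = x"
proof -
  have "s \<in> f ` {s..t}" "t \<in> f ` {s..t}" using onto st by auto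
  then obtain u1 u2 where u: "u1 \<in> {s..t}" "f u1 = s" "u2 \<in> {s..t}" "f u2 = t"
    by (metis imageE)
  define k where "k u = f u - u" for u
  have k: "k u1 \<le> 0" "0 \<le> k u2" using u by (auto simp: k_def)
  have kc: "continuous_on {c..d} k" if "{c..d} \<subseteq> {s..t}" for c d
    unfolding k_def by (intro continuous_intros continuous_on_subset[OF f that])
  have "\<exists>x. min u1 u2 \<le> x \<and> x \<le> max u1 u2 \<and> k x = 0"
  proof (cases "u1 \<le> u2")
    case True
    then show ?thesis using IVT'[of k u1 0 u2] k kc[of u1 u2] u by auto
  next
    case False
    then show ?thesis using IVT2'[of k u1 0 u2] k kc[of u2 u1] u by auto
  qed
  then show ?thesis using u by (force simp: k_def)
qed
lemma eventually_periodic_orbit: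
  assumes S: "finite S" "\<And>n. f n \<in> S" and step: "\<And>n. N \<le> n \<Longrightarrow> f (Suc n) = g (f n)"
  shows "\<exists>M q. 1 \<le> q \<and> (\<forall>n\<ge>M. f (n + q) = f n)"
proof -
  have "\<not> inj_on (\<lambda>m. f (N + m)) {0..card S}"
  proof
    assume "inj_on (\<lambda>m. f (N + m)) {0..card S}"
    then have "card ((\<lambda>m. f (N + m)) ` {0..card S}) = Suc (card S)" by (simp add: card_image)
    moreover have "(\<lambda>m. f (N + m)) ` {0..card S} \<subseteq> S" using S(2) by auto
    ultimately have "Suc (card S) \<le> card S" using card_mono[OF S(1)] by metis
    then show False by simp
  qed
  then obtain m1 m2 where m: "m1 \<noteq> m2" "f (N + m1) = f (N + m2)" unfolding inj_on_def by blast
  obtain i1 i2 where ii: "i1 < i2" "f (N + i1) = f (N + i2)"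
  proof (cases "m1 < m2")
    case True then show ?thesis using that m by blast
  next
    case False then show ?thesis using that[of m2 m1] m by simp
  qed
  define q where "q = i2 - i1"
  have per: "f (N + i1 + i + q) = f (N + i1 + i)" for i
  proof (induction i)
    case 0 then show ?case using ii by (simp add: q_def)
  next
    case (Suc i) then show ?case using step[of "N + i1 + i + q"] step[of "N + i1 + i"] by simp
  qed
  have "f (n + q) = f n" if "N + i1 \<le> n" for n
    using per[of "n - (N + i1)"] that by simp
  then show ?thesis using ii by (intro exI[of _ "N + i1"] exI[of _ q]) (simp add: q_def)
qed

lemma closed_subset_interval_attains_min_max:
  fixes S :: "real set"
  assumes "closed S" "S \<subseteq> {c..d}" "x \<in> S"
  shows "\<exists>m\<in>S. \<forall>y\<in>S. m \<le> y" "\<exists>M\<in>S. \<forall>y\<in>S. y \<le> M"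
proof -
  have "compact S"
    using assms(1,2) bounded_subset[OF bounded_closed_interval] compact_eq_bounded_closed by blast
  then show "\<exists>m\<in>S. \<forall>y\<in>S. m \<le> y" "\<exists>M\<in>S. \<forall>y\<in>S. y \<le> M"
    using compact_attains_inf compact_attains_sup assms(3) by blast+
qed

section \<open>Paths crossing an arc\<close>

text \<open>\<open>g\<close> is a path in a space containing the arc \<open>\<psi> ` {0..1} \<subseteq> B\<close>, attached to the rest
  of the space at \<open>\<psi> 0\<close>; \<open>f\<close> is the coordinate of \<open>g\<close> along the arc, with \<open>f t = 0\<close> whenever
  \<open>g t\<close> is off the arc.\<close>
locale branch_coordinate =
  fixes a b :: real and f :: "real \<Rightarrow> real" and g :: "real \<Rightarrow> 'b" and \<psi> :: "real \<Rightarrow> 'b"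
    and B :: "'b set"
  assumes le: "a \<le> b"
    and f_cont: "continuous_on {a..b} f"
    and f_range: "\<And>t. t \<in> {a..b} \<Longrightarrow> 0 \<le> f t \<and> f t \<le> 1"
    and g_in_B: "\<And>t. t \<in> {a..b} \<Longrightarrow> g t \<in> B \<Longrightarrow> g t = \<psi> (f t)"
    and g_notin_B: "\<And>t. t \<in> {a..b} \<Longrightarrow> g t \<notin> B \<Longrightarrow> f t = 0"
    and closed_preimage_B: "closed {t \<in> {a..b}. g t \<in> B}"
    and psi_in_B: "\<And>d. d \<in> {0..1} \<Longrightarrow> \<psi> d \<in> B"
    and inj_psi: "inj_on \<psi> {0..1}"
begin

lemma g_eq_psi_iff:
  assumes t: "t \<in> {a..b}" and d: "d \<in> {0..1}"
  shows "g t = \<psi> d \<longleftrightarrow> g t \<in> B \<and> f t = d"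
proof
  assume e: "g t = \<psi> d"
  then have "g t \<in> B" using psi_in_B d by simp
  moreover have "f t = d"
    using inj_onD[OF inj_psi, of "f t" d] g_in_B[OF t] e f_range[OF t] d calculation by auto
  ultimately show "g t \<in> B \<and> f t = d" by simp
qed (use g_in_B t in auto)

lemma g_eq_psi_if_pos: "t \<in> {a..b} \<Longrightarrow> 0 < f t \<Longrightarrow> g t \<in> B \<and> g t = \<psi> (f t)"
  using g_in_B g_notin_B by force

lemma continuous_on_f: "{c..d} \<subseteq> {a..b} \<Longrightarrow> continuous_on {c..d} f"
  using f_cont continuous_on_subset by blast

lemma closed_preimage_psi:
  assumes "{c..d} \<subseteq> {a..b}" "y \<in> {0..1}"
  shows "closed {t \<in> {c..d}. g t = \<psi> y}"
proof -
  have "{t \<in> {c..d}. g t = \<psi> y} = {t \<in> {a..b}. g t \<in> B} \<inter> {t \<in> {c..d}. f t = y}"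
    using g_eq_psi_iff assms by blast
  moreover have "closed {t \<in> {c..d}. f t = y}"
    using continuous_closed_preimage_constant[OF continuous_on_f[OF assms(1)]] by simp
  ultimately show ?thesis using closed_preimage_B by (simp add: closed_Int)
qed

lemma in_B_if_right_limit:
  assumes "a \<le> u" "u < v" "v \<le> b" "\<And>t. t \<in> {u<..v} \<Longrightarrow> g t \<in> B"
  shows "g u \<in> B"
proof -
  have "{u<..v} \<subseteq> {t \<in> {a..b}. g t \<in> B}" using assms by auto
  then have "closure {u<..v} \<subseteq> {t \<in> {a..b}. g t \<in> B}"
    using closure_minimal closed_preimage_B by blast
  moreover have "u \<in> closure {u<..v}" using assms by simp
  ultimately show ?thesis by blast
qed

lemma coordinate_below_upper_level:
  assumes s: "a \<le> s1" "s1 < s2" "s2 \<le> b" and d: "0 \<le> d1" "d1 < d2" and f1: "f s1 = d1"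
    and avoid: "\<And>t. t \<in> {s1<..<s2} \<Longrightarrow> g t \<noteq> \<psi> d2" and t: "t \<in> {s1<..<s2}"
  shows "f t < d2"
proof (rule ccontr)
  assume "\<not> f t < d2"
  then obtain t' where t': "s1 \<le> t'" "t' \<le> t" "f t' = d2"
    using IVT'[of f s1 d2 t] continuous_on_f[of s1 t] f1 d t s by auto
  then have "t' \<in> {s1<..<s2}" using t f1 d by (cases "t' = s1") auto
  moreover have "g t' = \<psi> d2" using g_eq_psi_if_pos[of t'] t' d t s by auto
  ultimately show False using avoid by blast
qed

lemma coordinate_above_lower_level:
  assumes s: "a \<le> s1" "s1 < s2" "s2 \<le> b" and d: "0 \<le> d1" "d1 < d2" and f2: "f s2 = d2"
    and avoid: "\<And>t. t \<in> {s1<..<s2} \<Longrightarrow> g t \<noteq> \<psi> d1" and t: "t \<in> {s1<..<s2}"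
  shows "d1 < f t"
proof (rule ccontr)
  assume ft: "\<not> d1 < f t"
  define L where "L = {t..s2} \<inter> f -` {..d1}"
  have "closed L"
    unfolding L_def using t s by (intro continuous_closed_preimage continuous_on_f) auto
  moreover have "L \<subseteq> {t..s2}" "t \<in> L" using ft t by (auto simp: L_def)
  ultimately obtain t' where t': "t' \<in> L" "\<And>u. u \<in> L \<Longrightarrow> u \<le> t'"
    using closed_subset_interval_attains_min_max(2)[of L t s2 t] by blast
  have t's: "t \<le> t'" "t' \<le> s2" "f t' \<le> d1" using t'(1) by (auto simp: L_def)
  then have "t' < s2" using f2 d by (cases "t' = s2") auto
  have "g u \<in> B" if u: "u \<in> {t'<..s2}" for u
  proof -
    have "u \<notin> L" using t'(2)[of u] u by force
    then have "0 < f u" using u t's d by (auto simp: L_def)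
    then show ?thesis using g_eq_psi_if_pos[of u] u t's t s by auto
  qed
  then have "g t' \<in> B" using in_B_if_right_limit[of t' s2] \<open>t' < s2\<close> t's t s by auto
  obtain u where u: "t' \<le> u" "u \<le> s2" "f u = d1"
    using IVT'[of f t' d1 s2] continuous_on_f[of t' s2] t's f2 d t s by auto
  then have "u \<in> L" using t's by (auto simp: L_def)
  then have "f t' = d1" using t'(2) u by force
  then have "g t' = \<psi> d1" using g_in_B[of t'] \<open>g t' \<in> B\<close> t's t s by auto
  moreover have "t' \<in> {s1<..<s2}" using t's \<open>t' < s2\<close> t by auto
  ultimately show False using avoid by blast
qed

lemma image_between_levels:
  assumes s: "a \<le> s1" "s1 < s2" "s2 \<le> b" and d: "0 \<le> d1" "d1 < d2" "d2 \<le> 1"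
    and f1: "f s1 = d1" and f2: "f s2 = d2" and e1: "g s1 = \<psi> d1" and e2: "g s2 = \<psi> d2"
    and avoid: "\<And>t. t \<in> {s1<..<s2} \<Longrightarrow> g t \<noteq> \<psi> d1 \<and> g t \<noteq> \<psi> d2"
  shows "g ` {s1..s2} = \<psi> ` {d1..d2}"
proof -
  have inab: "t \<in> {a..b}" if "t \<in> {s1..s2}" for t using that s by auto
  have avoid1: "\<And>t. t \<in> {s1<..<s2} \<Longrightarrow> g t \<noteq> \<psi> d1"
    and avoid2: "\<And>t. t \<in> {s1<..<s2} \<Longrightarrow> g t \<noteq> \<psi> d2" using avoid by blast+
  have below: "f t < d2" and above: "d1 < f t" if "t \<in> {s1<..<s2}" for t
    using coordinate_below_upper_level[OF s d(1,2) f1 avoid2 that]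
      coordinate_above_lower_level[OF s d(1,2) f2 avoid1 that] by auto
  show ?thesis
  proof
    show "g ` {s1..s2} \<subseteq> \<psi> ` {d1..d2}"
    proof
      fix y assume "y \<in> g ` {s1..s2}"
      then obtain t where t: "t \<in> {s1..s2}" "y = g t" by blast
      show "y \<in> \<psi> ` {d1..d2}"
      proof (cases "t = s1 \<or> t = s2")
        case True then show ?thesis using t e1 e2 d by auto
      next
        case False
        then have "t \<in> {s1<..<s2}" using t by auto
        then show ?thesis
          using below above g_eq_psi_if_pos[of t] inab t d by (force intro: less_imp_le)
      qed
    qed
    show "\<psi> ` {d1..d2} \<subseteq> g ` {s1..s2}"
    proof
      fix y assume "y \<in> \<psi> ` {d1..d2}"
      then obtain d where dd: "d \<in> {d1..d2}" "y = \<psi> d" by blast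
      show "y \<in> g ` {s1..s2}"
      proof (cases "d = d1")
        case True then show ?thesis using dd e1 s by force
      next
        case False
        obtain t where "s1 \<le> t" "t \<le> s2" "f t = d"
          using IVT'[of f s1 d s2] continuous_on_f[of s1 s2] dd f1 f2 s by auto
        moreover have "0 < d" using False dd d by auto
        ultimately show ?thesis using g_eq_psi_if_pos[of t] inab dd by force
      qed
    qed
  qed
qed

lemma cover_forward:
  assumes t: "a \<le> t1" "t1 \<le> t2" "t2 \<le> b" and d: "0 \<le> d1" "d1 \<le> d2" "d2 \<le> 1"
    and e1: "g t1 = \<psi> d1" and e2: "g t2 = \<psi> d2"
  shows "\<exists>s1 s2. t1 \<le> s1 \<and> s1 \<le> s2 \<and> s2 \<le> t2 \<and> g ` {s1..s2} = \<psi> ` {d1..d2}"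
proof (cases "d1 = d2")
  case True
  then show ?thesis using t e1 by (intro exI[of _ t1]) auto
next
  case False
  then have dd: "d1 < d2" using d by simp
  have ne: "\<psi> d1 \<noteq> \<psi> d2" using inj_onD[OF inj_psi] dd d by force
  define Z2 where "Z2 = {t \<in> {t1..t2}. g t = \<psi> d2}"
  have Z2: "closed Z2" "Z2 \<subseteq> {t1..t2}" "t2 \<in> Z2"
    using closed_preimage_psi[of t1 t2 d2] t d e2 by (auto simp: Z2_def)
  obtain s2 where s2: "s2 \<in> Z2" "\<And>t. t \<in> Z2 \<Longrightarrow> s2 \<le> t"
    using closed_subset_interval_attains_min_max(1)[OF Z2] by blast
  define Z1 where "Z1 = {t \<in> {t1..s2}. g t = \<psi> d1}"
  have Z1: "closed Z1" "Z1 \<subseteq> {t1..s2}" "t1 \<in> Z1"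
    using closed_preimage_psi[of t1 s2 d1] t d e1 s2(1) by (auto simp: Z1_def Z2_def)
  obtain s1 where s1: "s1 \<in> Z1" "\<And>t. t \<in> Z1 \<Longrightarrow> t \<le> s1"
    using closed_subset_interval_attains_min_max(2)[OF Z1] by blast
  have s12: "t1 \<le> s1" "s1 < s2" "s2 \<le> t2"
    using s1(1) s2(1) ne unfolding Z1_def Z2_def by (auto simp: order.order_iff_strict)
  have "f s1 = d1" "f s2 = d2"
    using g_eq_psi_iff[of s1 d1] g_eq_psi_iff[of s2 d2] s1(1) s2(1) s12 t d
    unfolding Z1_def Z2_def by auto
  moreover have "g t \<noteq> \<psi> d1 \<and> g t \<noteq> \<psi> d2" if "t \<in> {s1<..<s2}" for t
    using that s1(2)[of t] s2(2)[of t] s12 unfolding Z1_def Z2_def by force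
  ultimately have "g ` {s1..s2} = \<psi> ` {d1..d2}"
    using image_between_levels[of s1 s2 d1 d2] s12 t d dd s1(1) s2(1)
    unfolding Z1_def Z2_def by auto
  then show ?thesis using s12 by (intro exI[of _ s1] exI[of _ s2]) auto
qed

lemma branch_coordinate_reflect: "branch_coordinate (-b) (-a) (\<lambda>t. f (-t)) (\<lambda>t. g (-t)) \<psi> B"
proof
  have "closed (uminus -` {t \<in> {a..b}. g t \<in> B})"
    by (rule continuous_closed_vimage[OF closed_preimage_B]) (intro continuous_intros)
  moreover have "{t \<in> {-b..-a}. g (-t) \<in> B} = uminus -` {t \<in> {a..b}. g t \<in> B}" by auto
  ultimately show "closed {t \<in> {-b..-a}. g (-t) \<in> B}" by simp
  show "continuous_on {-b..-a} (\<lambda>t. f (-t))"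
    by (rule continuous_on_compose2[OF f_cont]) (auto intro!: continuous_intros)
qed (use le f_range g_in_B g_notin_B psi_in_B inj_psi in auto)

lemma cover_between:
  assumes t: "t1 \<in> {a..b}" "t2 \<in> {a..b}" and d: "0 \<le> d1" "d1 \<le> d2" "d2 \<le> 1"
    and e1: "g t1 = \<psi> d1" and e2: "g t2 = \<psi> d2"
  shows "\<exists>s1 s2. min t1 t2 \<le> s1 \<and> s1 \<le> s2 \<and> s2 \<le> max t1 t2 \<and> g ` {s1..s2} = \<psi> ` {d1..d2}"
proof (cases "t1 \<le> t2")
  case True
  then show ?thesis using cover_forward[of t1 t2 d1 d2] t d e1 e2 by auto
next
  case False
  interpret R: branch_coordinate "-b" "-a" "\<lambda>t. f (-t)" "\<lambda>t. g (-t)" \<psi> B by (rule branch_coordinate_reflect)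
  obtain s1 s2 where s: "-t1 \<le> s1" "s1 \<le> s2" "s2 \<le> -t2" "(\<lambda>t. g (-t)) ` {s1..s2} = \<psi> ` {d1..d2}"
    using R.cover_forward[of "-t1" "-t2" d1 d2] t d e1 e2 False by auto
  have "g ` {-s2..-s1} = (\<lambda>t. g (-t)) ` {s1..s2}"
    by (simp add: image_image[symmetric])
  then show ?thesis using s False by (intro exI[of _ "-s2"] exI[of _ "-s1"]) auto
qed

lemma image_Int_branch:
  assumes c: "a \<le> c1" "c1 \<le> c2" "c2 \<le> b" and t0: "t0 \<in> {c1..c2}" "g t0 = \<psi> 0"
  shows "\<exists>M\<in>{0..1}. g ` {c1..c2} \<inter> B = \<psi> ` {0..M}"
proof -
  have sub: "{c1..c2} \<subseteq> {a..b}" using c by auto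
  obtain m M where mM: "f ` {c1..c2} = {m..M}" "m \<le> M"
    using continuous_image_closed_interval[OF c(2) continuous_on_f[OF sub]] by blast
  have "f t0 = 0" using g_eq_psi_iff[of t0 0] t0 sub by auto
  moreover have "f t0 \<in> f ` {c1..c2}" using t0(1) by (rule imageI)
  ultimately have "0 \<in> {m..M}" by (simp only: mM(1))
  moreover have "m \<in> f ` {c1..c2}" "M \<in> f ` {c1..c2}" using mM by auto
  then have "0 \<le> m" "M \<le> 1" using f_range sub by auto
  ultimately have m: "m = 0" "M \<in> {0..1}" by auto
  have "g ` {c1..c2} \<inter> B \<subseteq> \<psi> ` {0..M}"
  proof
    fix y assume "y \<in> g ` {c1..c2} \<inter> B"
    then obtain t where t: "t \<in> {c1..c2}" "y = g t" "g t \<in> B" by blast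
    then have "y = \<psi> (f t)" "f t \<in> {0..M}" using g_in_B[of t] sub mM m by auto
    then show "y \<in> \<psi> ` {0..M}" by blast
  qed
  moreover have "\<psi> ` {0..M} \<subseteq> g ` {c1..c2} \<inter> B"
  proof (rule image_subsetI)
    fix d assume d: "d \<in> {0..M}"
    show "\<psi> d \<in> g ` {c1..c2} \<inter> B"
    proof (cases "d = 0")
      case True
      then have "\<psi> d = g t0" "g t0 \<in> B" using t0 psi_in_B[of 0] by auto
      then show ?thesis using t0(1) by (metis IntI imageI)
    next
      case False
      have "d \<in> f ` {c1..c2}" using d by (simp only: mM(1) m)
      then obtain t where t: "t \<in> {c1..c2}" "f t = d" by (auto simp del: atLeastAtMost_iff)
      then have "g t = \<psi> d" "g t \<in> B" using g_eq_psi_if_pos[of t] sub d False by auto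
      then show ?thesis using t(1) by (metis IntI imageI)
    qed
  qed
  ultimately have "g ` {c1..c2} \<inter> B = \<psi> ` {0..M}" by (rule subset_antisym)
  then show ?thesis using m(2) by (intro bexI[of _ M])
qed

end

section \<open>Translations, the retraction and the branches\<close>

locale sun_like_partition =
  fixes T :: "'a topology" and h :: "real \<Rightarrow> 'a" and \<tau> F :: "'a \<Rightarrow> 'a"
    and \<Lambda> :: "'i set" and \<phi> :: "'i \<Rightarrow> real \<Rightarrow> 'a"
    and P :: "'a set set" and lab :: "'a set \<Rightarrow> 'i" and p :: "'a set \<Rightarrow> int"
  assumes lifted: "lifted_graph T h \<tau>"
    and F_cont: "continuous_map T T F"
    and deg1: "degree_one T \<tau> F"
    and sunlike: "sun_like T h F \<Lambda> \<phi>"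
    and partition: "basic_partition T h \<tau> F \<Lambda> \<phi> P lab p"
begin

abbreviation "tsp \<equiv> topspace T"
abbreviation "sh \<equiv> zsh T \<tau>"
abbreviation "tau_inv \<equiv> inv_into (topspace T) \<tau>"

lemma homeomorphic_tau: "homeomorphic_map T T \<tau>"
  using lifted by (simp add: lifted_graph_def)

lemma tau_in_top: "x \<in> tsp \<Longrightarrow> \<tau> x \<in> tsp"
  using homeomorphic_imp_surjective_map[OF homeomorphic_tau] by blast

lemma inj_on_tau: "inj_on \<tau> tsp"
  using homeomorphic_imp_injective_map[OF homeomorphic_tau] .

lemma tau_image: "\<tau> ` tsp = tsp"
  using homeomorphic_imp_surjective_map[OF homeomorphic_tau] .

lemma tau_inv_in_top: "y \<in> tsp \<Longrightarrow> tau_inv y \<in> tsp"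
  by (metis inv_into_into tau_image)

lemma tau_tau_inv: "y \<in> tsp \<Longrightarrow> \<tau> (tau_inv y) = y"
  by (simp add: f_inv_into_f tau_image)

lemma tau_inv_tau: "x \<in> tsp \<Longrightarrow> tau_inv (\<tau> x) = x"
  by (simp add: inv_into_f_f inj_on_tau)

lemma homeomorphic_tau_inv: "homeomorphic_map T T tau_inv"
proof -
  obtain g where g: "homeomorphic_maps T T \<tau> g"
    using homeomorphic_tau homeomorphic_map_maps by blast
  then have gh: "homeomorphic_map T T g" and "\<And>y. y \<in> tsp \<Longrightarrow> \<tau> (g y) = y"
    and "\<And>y. y \<in> tsp \<Longrightarrow> g y \<in> tsp"
    by (auto simp: homeomorphic_maps_map dest: homeomorphic_imp_surjective_map)
  then have "\<And>y. y \<in> tsp \<Longrightarrow> g y = tau_inv y"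
    by (metis tau_inv_tau)
  then show ?thesis using homeomorphic_map_eq[OF gh] by blast
qed

lemma tau_pow_in_top: "x \<in> tsp \<Longrightarrow> (\<tau> ^^ n) x \<in> tsp"
  by (induction n) (auto simp: tau_in_top)

lemma tau_inv_pow_in_top: "x \<in> tsp \<Longrightarrow> (tau_inv ^^ n) x \<in> tsp"
  by (induction n) (auto simp: tau_inv_in_top)

lemma sh_in_top: "x \<in> tsp \<Longrightarrow> sh m x \<in> tsp"
  by (simp add: zsh_def tau_pow_in_top tau_inv_pow_in_top)

lemma sh_0[simp]: "sh 0 x = x"
  by (simp add: zsh_def)

lemma sh_plus_1: assumes "x \<in> tsp" shows "sh (m + 1) x = \<tau> (sh m x)"
proof (cases "0 \<le> m")
  case True
  then have "nat (m+1) = Suc (nat m)" by simp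
  then show ?thesis using True by (simp add: zsh_def)
next
  case False
  then obtain k where k: "nat (-m) = Suc k" and "m + 1 \<le> 0"
    by (metis add.commute gr0_implies_Suc int_one_le_iff_zero_less le_add_same_cancel1
        less_le not_le zero_less_nat_eq neg_0_less_iff_less zless_imp_add1_zle)
  then have k2: "nat (-(m+1)) = k" by simp
  have "\<tau> ((tau_inv ^^ Suc k) x) = (tau_inv ^^ k) x"
    using tau_tau_inv tau_inv_pow_in_top[OF \<open>x \<in> tsp\<close>] by simp
  then show ?thesis using False k k2 \<open>m + 1 \<le> 0\<close>
    by (cases "m + 1 = 0") (auto simp: zsh_def)
qed

lemma sh_minus_1: "x \<in> tsp \<Longrightarrow> sh (m - 1) x = tau_inv (sh m x)"
  by (metis diff_add_cancel sh_plus_1 sh_in_top tau_inv_tau)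

lemma sh_1: "sh 1 x = \<tau> x"
  by (simp add: zsh_def)

lemma sh_add: "x \<in> tsp \<Longrightarrow> sh m (sh n x) = sh (m + n) x"
proof (induction m rule: int_induct[where k=0])
  case base then show ?case by simp
next
  case (step1 i)
  then show ?case using sh_plus_1 sh_in_top
    by (metis add.commute add.left_commute)
next
  case (step2 i)
  then show ?case using sh_minus_1 sh_in_top
    by (metis add.commute add_diff_eq)
qed

lemma sh_cancel: "x \<in> tsp \<Longrightarrow> sh (-m) (sh m x) = x"
  by (simp add: sh_add)

lemma homeomorphic_tau_pow: "homeomorphic_map T T (\<tau> ^^ n)"
proof (induction n)
  case 0 then show ?case by (simp add: id_def[symmetric])
next
  case (Suc n) then show ?case
    using homeomorphic_map_compose[OF Suc homeomorphic_tau] by (metis funpow.simps(2) funpow_swap1)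
qed

lemma homeomorphic_tau_inv_pow: "homeomorphic_map T T (tau_inv ^^ n)"
proof (induction n)
  case 0 then show ?case by (simp add: id_def[symmetric])
next
  case (Suc n) then show ?case
    using homeomorphic_map_compose[OF Suc homeomorphic_tau_inv] by (metis funpow.simps(2) funpow_swap1)
qed

lemma homeomorphic_sh: "homeomorphic_map T T (sh m)"
proof -
  have "sh m = (if 0 \<le> m then \<tau> ^^ nat m else tau_inv ^^ nat (-m))"
    by (rule ext) (simp add: zsh_def)
  then show ?thesis using homeomorphic_tau_pow homeomorphic_tau_inv_pow by simp
qed

lemma F_in_top: "x \<in> tsp \<Longrightarrow> F x \<in> tsp"
  using F_cont by (auto simp: continuous_map_def)

lemma Fpow_in_top: "x \<in> tsp \<Longrightarrow> (F ^^ n) x \<in> tsp"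
  by (induction n) (auto simp: F_in_top)

lemma F_tau_commute: "x \<in> tsp \<Longrightarrow> F (\<tau> x) = \<tau> (F x)"
  using deg1 by (simp add: degree_one_def)

lemma F_tau_inv_commute: "x \<in> tsp \<Longrightarrow> F (tau_inv x) = tau_inv (F x)"
  by (metis F_tau_commute F_in_top tau_inv_tau tau_tau_inv tau_inv_in_top)

lemma F_sh_commute: "x \<in> tsp \<Longrightarrow> F (sh m x) = sh m (F x)"
proof (induction m rule: int_induct[where k=0])
  case base then show ?case by simp
next
  case (step1 i)
  then show ?case by (simp add: sh_plus_1 F_tau_commute sh_in_top F_in_top)
next
  case (step2 i)
  then show ?case by (simp add: sh_minus_1 F_tau_inv_commute sh_in_top F_in_top)
qed

lemma Fpow_sh_commute: "x \<in> tsp \<Longrightarrow> (F ^^ n) (sh m x) = sh m ((F ^^ n) x)"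
  by (induction n) (auto simp: F_sh_commute Fpow_in_top)

abbreviation "line \<equiv> range h"
abbreviation "off_line \<equiv> subtopology T (tsp - range h)"
abbreviation "branch_comp y \<equiv> connected_component_of_set off_line y"
abbreviation "retr \<equiv> rR T h"

lemma h_in_top: "h x \<in> tsp"
  using lifted by (auto simp: lifted_graph_def)

lemma h_inj: "inj h"
proof -
  have "homeomorphic_map euclideanreal (subtopology T (range h)) h"
    using lifted by (simp add: lifted_graph_def)
  then show ?thesis using homeomorphic_imp_injective_map by fastforce
qed

lemma tau_h: "\<tau> (h x) = h (x + 1)"
  using lifted by (simp add: lifted_graph_def)

lemma tau_inv_h: "tau_inv (h x) = h (x - 1)"
  by (metis diff_add_cancel h_in_top tau_h tau_inv_tau)

lemma sh_h: "sh m (h x) = h (x + of_int m)"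
proof (induction m rule: int_induct[where k=0])
  case base then show ?case by simp
next
  case (step1 i) then show ?case by (simp add: sh_plus_1 h_in_top tau_h add.assoc)
next
  case (step2 i) then show ?case by (simp add: sh_minus_1 h_in_top tau_inv_h diff_add_eq add_diff_eq)
qed

lemma sh_in_line_iff: "y \<in> tsp \<Longrightarrow> sh m y \<in> line \<longleftrightarrow> y \<in> line"
proof
  assume y: "y \<in> tsp" and "sh m y \<in> line"
  then obtain x where "sh m y = h x" by auto
  then have "sh (-m) (sh m y) = h (x + of_int (-m))" by (simp add: sh_h)
  then have "y = h (x + of_int (-m))" using sh_cancel[OF y] by simp
  then show "y \<in> line" by simp
next
  assume "y \<in> line" then show "sh m y \<in> line" using sh_h by auto
qed

lemma ex1_attaching_point:
  assumes "y \<in> tsp - line"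
  shows "\<exists>!x. h x \<in> T closure_of (branch_comp y)"
proof -
  have "branch_comp y \<in> connected_components_of off_line"
    using assms by (simp add: connected_component_in_connected_components_of)
  then have "\<exists>!z. z \<in> T closure_of (branch_comp y) \<inter> line"
    using lifted by (simp add: lifted_graph_def)
  then show ?thesis using h_inj unfolding inj_def by blast
qed

lemma retr_off_line:
  assumes "y \<in> tsp - line" "h x \<in> T closure_of (branch_comp y)"
  shows "retr y = x"
proof -
  have "retr y = (THE x. h x \<in> T closure_of (branch_comp y))"
    using assms by (simp add: rR_def)
  also have "\<dots> = x" by (rule the1_equality[OF ex1_attaching_point[OF assms(1)] assms(2)])
  finally show ?thesis .
qed

lemma retr_h: "retr (h x) = x"
  using h_inj by (simp add: rR_def)

lemma tau_in_line_iff: "y \<in> tsp \<Longrightarrow> \<tau> y \<in> line \<longleftrightarrow> y \<in> line"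
  using sh_in_line_iff[of y 1] by (simp add: sh_1)

lemma homeomorphic_tau_off_line: "homeomorphic_map off_line off_line \<tau>"
proof -
  have "\<tau> ` (tsp \<inter> (tsp - line)) = tsp \<inter> (tsp - line)"
  proof
    show "\<tau> ` (tsp \<inter> (tsp - line)) \<subseteq> tsp \<inter> (tsp - line)"
    proof
      fix z assume "z \<in> \<tau> ` (tsp \<inter> (tsp - line))"
      then obtain y where y: "y \<in> tsp" "y \<notin> line" "z = \<tau> y" by blast
      then show "z \<in> tsp \<inter> (tsp - line)" using tau_in_top[OF y(1)] tau_in_line_iff[OF y(1)] by simp
    qed
    show "tsp \<inter> (tsp - line) \<subseteq> \<tau> ` (tsp \<inter> (tsp - line))"
    proof
      fix z assume z: "z \<in> tsp \<inter> (tsp - line)"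
      then have z1: "z \<in> tsp" "z \<notin> line" by auto
      have a: "tau_inv z \<in> tsp" using tau_inv_in_top z1 by simp
      have b: "\<tau> (tau_inv z) = z" using tau_tau_inv z1 by simp
      have c: "tau_inv z \<notin> line" using tau_in_line_iff[OF a] b z1 by simp
      show "z \<in> \<tau> ` (tsp \<inter> (tsp - line))"
        using a b c by (intro image_eqI[where x="tau_inv z"]) auto
    qed
  qed
  then show ?thesis
    by (rule homeomorphic_map_subtopologies[OF homeomorphic_tau])
qed

lemma retr_tau:
  assumes y: "y \<in> tsp"
  shows "retr (\<tau> y) = retr y + 1"
proof (cases "y \<in> line")
  case True
  then obtain x where "y = h x" by auto
  then show ?thesis by (simp add: tau_h retr_h)
next
  case False
  then have y': "y \<in> tsp - line" using y by simp
  then have ty: "\<tau> y \<in> tsp - line" using tau_in_line_iff tau_in_top y by auto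
  obtain x where x: "h x \<in> T closure_of (branch_comp y)" using ex1_attaching_point[OF y'] by auto
  have "branch_comp (\<tau> y) = \<tau> ` branch_comp y"
    using homeomorphic_map_connected_component_of[OF homeomorphic_tau_off_line] y' by simp
  moreover have "branch_comp y \<subseteq> tsp"
    using connected_component_of_subset_topspace[of off_line y] by auto
  ultimately have "T closure_of (branch_comp (\<tau> y)) = \<tau> ` (T closure_of (branch_comp y))"
    using homeomorphic_map_closure_of[OF homeomorphic_tau] by simp
  then have "h (x + 1) \<in> T closure_of (branch_comp (\<tau> y))"
    using x tau_h by (metis image_eqI)
  then have "retr (\<tau> y) = x + 1" using retr_off_line[OF ty] by blast
  moreover have "retr y = x" using retr_off_line[OF y' x] .
  ultimately show ?thesis by simp
qed

lemma retr_sh: "y \<in> tsp \<Longrightarrow> retr (sh m y) = retr y + of_int m"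
proof (induction m rule: int_induct[where k=0])
  case base then show ?case by simp
next
  case (step1 i) then show ?case by (simp add: sh_plus_1 sh_in_top retr_tau)
next
  case (step2 i)
  then have "retr (\<tau> (sh (i - 1) y)) = retr (sh (i - 1) y) + 1"
    using retr_tau sh_in_top by blast
  moreover have "\<tau> (sh (i - 1) y) = sh i y"
    by (metis diff_add_cancel sh_plus_1 step2.prems)
  ultimately show ?case using step2 by simp
qed

lemma retr_connected:
  assumes "connectedin T K" "K \<subseteq> tsp - line" "y \<in> K" "h x \<in> T closure_of K"
  shows "retr y = x"
proof -
  have "connectedin off_line K" using assms by (simp add: connectedin_subtopology)
  then have "K \<subseteq> branch_comp y" using connected_component_of_maximal assms(3) by metis
  then have "h x \<in> T closure_of (branch_comp y)" using assms(4) closure_of_mono by blast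
  then show ?thesis using retr_off_line assms by blast
qed

lemma retr_connected_eq:
  assumes "connectedin T K" "K \<subseteq> tsp - line" "y \<in> K" "z \<in> K"
  shows "retr y = retr z"
proof -
  have "connectedin off_line K" using assms by (simp add: connectedin_subtopology)
  then have "K \<subseteq> branch_comp y" "K \<subseteq> branch_comp z" using connected_component_of_maximal assms by metis+
  then have e: "branch_comp y = branch_comp z"
    using connected_component_of_eq_overlap[of off_line y z] assms by blast
  obtain x where "h x \<in> T closure_of (branch_comp y)" using ex1_attaching_point assms by blast
  moreover have "y \<in> tsp - line" "z \<in> tsp - line" using assms by auto
  ultimately show ?thesis using retr_off_line[of y] retr_off_line[of z] e by metis
qed

abbreviation "TRF \<equiv> TR T h F"
abbreviation "int_TR \<equiv> T interior_of TR T h F"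
abbreviation "X \<equiv> Xset T h F"
abbreviation "orbit_line \<equiv> (\<Union>n. (F ^^ n) ` line)"

lemma orbit_line_in_top: "orbit_line \<subseteq> tsp"
  using Fpow_in_top h_in_top by blast

lemma line_subset_orbit: "line \<subseteq> orbit_line"
proof
  fix y assume "y \<in> line" then show "y \<in> orbit_line"
    by (intro UN_I[of 0]) auto
qed

lemma TR_in_top: "TRF \<subseteq> tsp"
  by (simp add: TR_def closure_of_subset_topspace)

lemma line_subset_TR: "line \<subseteq> TRF"
proof -
  have "orbit_line \<subseteq> T closure_of orbit_line" by (rule closure_of_subset[OF orbit_line_in_top])
  then show ?thesis unfolding TR_def using line_subset_orbit by (rule order_trans[rotated])
qed

lemma sh_orbit_line_subset: "sh m ` orbit_line \<subseteq> orbit_line"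
proof
  fix z assume "z \<in> sh m ` orbit_line"
  then obtain n x where z: "z = sh m ((F ^^ n) (h x))" by blast
  then have "z = (F ^^ n) (h (x + of_int m))"
    by (simp add: Fpow_sh_commute[symmetric] h_in_top sh_h)
  then show "z \<in> orbit_line" by blast
qed

lemma sh_orbit_line: "sh m ` orbit_line = orbit_line"
proof
  show "sh m ` orbit_line \<subseteq> orbit_line" by (rule sh_orbit_line_subset)
  show "orbit_line \<subseteq> sh m ` orbit_line"
  proof
    fix z assume z: "z \<in> orbit_line"
    have "sh (-m) z \<in> orbit_line" by (rule subsetD[OF sh_orbit_line_subset imageI[OF z]])
    moreover have "z \<in> tsp" using z orbit_line_in_top by blast
    then have "sh m (sh (-m) z) = z" using sh_add[of z m "-m"] by simp
    ultimately show "z \<in> sh m ` orbit_line" by (intro image_eqI[where x="sh (-m) z"]) auto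
  qed
qed

lemma sh_image_TR: "sh m ` TRF = TRF"
  unfolding TR_def
  using homeomorphic_map_closure_of[OF homeomorphic_sh orbit_line_in_top, of m] sh_orbit_line by simp

lemma sh_image_int_TR: "sh m ` int_TR = int_TR"
  using homeomorphic_map_interior_of[OF homeomorphic_sh TR_in_top, of m] sh_image_TR by simp

lemma sh_in_invariant_iff:
  assumes "S \<subseteq> tsp" "\<And>m. sh m ` S = S" "y \<in> tsp"
  shows "sh m y \<in> S \<longleftrightarrow> y \<in> S"
proof
  assume "sh m y \<in> S"
  then have "sh (-m) (sh m y) \<in> S" using assms(2)[of "-m"] by blast
  then show "y \<in> S" using sh_cancel[OF assms(3)] by simp
next
  assume "y \<in> S" then show "sh m y \<in> S" using assms(2)[of m] by blast
qed

lemma int_TR_in_top: "int_TR \<subseteq> tsp"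
  by (simp add: interior_of_subset_topspace)

lemma sh_in_int_TR_iff: "y \<in> tsp \<Longrightarrow> sh m y \<in> int_TR \<longleftrightarrow> y \<in> int_TR"
  using sh_in_invariant_iff[OF int_TR_in_top sh_image_int_TR] .

lemma X_eq: "X = (tsp - int_TR) \<inter> {y. retr y \<in> {0..<1}}"
  unfolding Xset_def closure_of_complement ..

lemma X_in_top: "x \<in> X \<Longrightarrow> x \<in> tsp"
  using X_eq by auto

lemma X_retr: "x \<in> X \<Longrightarrow> 0 \<le> retr x \<and> retr x < 1"
  using X_eq by auto

lemma X_not_int_TR: "x \<in> X \<Longrightarrow> x \<notin> int_TR"
  using X_eq by auto

lemma sh_X_unique:
  assumes "x \<in> X" "y \<in> X" "sh m x = sh n y"
  shows "m = n"
proof -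
  have "retr (sh m x) = retr x + of_int m" using retr_sh X_in_top assms(1) by blast
  moreover have "retr (sh n y) = retr y + of_int n" using retr_sh X_in_top assms(2) by blast
  ultimately have "retr x + of_int m = retr y + of_int n" using assms(3) by simp
  moreover have "0 \<le> retr x" "retr x < 1" "0 \<le> retr y" "retr y < 1" using X_retr assms by auto
  ultimately have "of_int m < of_int n + (1::real)" "of_int n < of_int m + (1::real)" by linarith+
  then show "m = n" by linarith
qed

abbreviation "branch i \<equiv> \<phi> i ` {0..1}"

lemma homeomorphic_phi: "i \<in> \<Lambda> \<Longrightarrow> homeomorphic_map (top_of_set {0..1}) (subtopology T (branch i)) (\<phi> i)"
  using sunlike by (simp add: sun_like_def)

lemma branch_Int_TR: "i \<in> \<Lambda> \<Longrightarrow> branch i \<inter> TRF = {\<phi> i 0}"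
  using sunlike by (simp add: sun_like_def)

lemma closure_branch: "i \<in> \<Lambda> \<Longrightarrow> T closure_of (\<phi> i ` {0<..1}) = branch i"
  using sunlike by (simp add: sun_like_def)

lemma branches_disjoint: "i \<in> \<Lambda> \<Longrightarrow> j \<in> \<Lambda> \<Longrightarrow> i \<noteq> j \<Longrightarrow> branch i \<inter> branch j = {}"
  using sunlike by (auto simp: sun_like_def disjnt_def)

lemma branches_cover: "(tsp - TRF) \<inter> {y. retr y \<in> {0..<1}} = (\<Union>i\<in>\<Lambda>. \<phi> i ` {0<..1})"
  using sunlike by (simp add: sun_like_def)

lemma branch_in_top: "i \<in> \<Lambda> \<Longrightarrow> branch i \<subseteq> tsp"
  using closure_branch closure_of_subset_topspace by metis

lemma continuous_phi: "i \<in> \<Lambda> \<Longrightarrow> continuous_map (top_of_set {0..1}) T (\<phi> i)"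
  using homeomorphic_imp_continuous_map[OF homeomorphic_phi] continuous_map_in_subtopology by blast

lemma inj_on_phi: "i \<in> \<Lambda> \<Longrightarrow> inj_on (\<phi> i) {0..1}"
  using homeomorphic_imp_injective_map[OF homeomorphic_phi] by simp

lemma closedin_branch: "i \<in> \<Lambda> \<Longrightarrow> closedin T (branch i)"
  using closure_branch by (metis closedin_closure_of)

lemma phi_pos: "i \<in> \<Lambda> \<Longrightarrow> t \<in> {0<..1} \<Longrightarrow> \<phi> i t \<in> tsp \<and> \<phi> i t \<notin> TRF \<and> 0 \<le> retr (\<phi> i t) \<and> retr (\<phi> i t) < 1"
proof -
  assume i: "i \<in> \<Lambda>" and t: "t \<in> {0<..1}"
  have "\<phi> i t \<in> (\<Union>i\<in>\<Lambda>. \<phi> i ` {0<..1})" using i t by blast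
  then have "\<phi> i t \<in> (tsp - TRF) \<inter> {y. retr y \<in> {0..<1}}" using branches_cover by simp
  then show ?thesis by simp
qed

lemma connectedin_phi_image:
  assumes "i \<in> \<Lambda>" "S \<subseteq> {0..1}" "is_interval S"
  shows "connectedin T (\<phi> i ` S)"
proof -
  have "connectedin (top_of_set {0..1}) S"
    using assms by (simp add: connectedin_subtopology is_interval_connected)
  then show ?thesis using connectedin_continuous_map_image[OF continuous_phi[OF assms(1)]] by blast
qed

lemma branch_tip_off_line: "i \<in> \<Lambda> \<Longrightarrow> \<phi> i ` {0<..1} \<subseteq> tsp - line"
  using phi_pos line_subset_TR by fastforce

lemma retr_branch:
  assumes i: "i \<in> \<Lambda>" and t: "t \<in> {0..1}"
  shows "retr (\<phi> i t) = retr (\<phi> i 1)"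
proof (cases "\<phi> i 0 \<in> line")
  case True
  then obtain x0 where x0: "\<phi> i 0 = h x0" by auto
  have K: "connectedin T (\<phi> i ` {0<..1})"
    using connectedin_phi_image[OF i, of "{0<..1}"] by (simp add: is_interval_connected_1 subset_iff)
  note K2 = branch_tip_off_line[OF i]
  have "\<phi> i 0 \<in> branch i" by simp
  then have "h x0 \<in> T closure_of (\<phi> i ` {0<..1})"
    unfolding closure_branch[OF i] x0[symmetric] .
  then have a: "\<And>s. s \<in> {0<..1} \<Longrightarrow> retr (\<phi> i s) = x0"
    using retr_connected[OF K K2] by blast
  show ?thesis
  proof (cases "t = 0")
    case True then show ?thesis using a[of 1] x0 retr_h by simp
  next
    case False then have "t \<in> {0<..1}" using t by simp
    then show ?thesis using a[of 1] a[of t] by simp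
  qed
next
  case False
  have K: "connectedin T (branch i)"
    using connectedin_phi_image[OF i, of "{0..1}"] by (simp add: is_interval_cc)
  have K2: "branch i \<subseteq> tsp - line"
  proof
    fix y assume "y \<in> branch i"
    then obtain s where s: "s \<in> {0..1}" "y = \<phi> i s" by blast
    show "y \<in> tsp - line"
    proof (cases "s = 0")
      case True then show ?thesis using False s branch_in_top[OF i] by auto
    next
      case False
      then have "y \<in> \<phi> i ` {0<..1}" using s by auto
      then show ?thesis using branch_tip_off_line[OF i] by blast
    qed
  qed
  have "\<phi> i t \<in> branch i" "\<phi> i 1 \<in> branch i" using t by auto
  then show ?thesis using retr_connected_eq[OF K K2] by blast
qed

lemma retr_branch_bounds: "i \<in> \<Lambda> \<Longrightarrow> t \<in> {0..1} \<Longrightarrow> 0 \<le> retr (\<phi> i t) \<and> retr (\<phi> i t) < 1"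
proof -
  assume i: "i \<in> \<Lambda>" and t: "t \<in> {0..1}"
  have "retr (\<phi> i t) = retr (\<phi> i 1)" by (rule retr_branch[OF i t])
  moreover have "0 \<le> retr (\<phi> i 1) \<and> retr (\<phi> i 1) < 1" using phi_pos[OF i, of 1] by simp
  ultimately show ?thesis by simp
qed

lemma branch_subset_X: assumes i: "i \<in> \<Lambda>" shows "branch i \<subseteq> X"
proof
  fix y assume y: "y \<in> branch i"
  then obtain t where t: "t \<in> {0..1}" "y = \<phi> i t" by auto
  have "\<phi> i ` {0<..1} \<subseteq> tsp - TRF" using phi_pos[OF i] by blast
  then have "branch i \<subseteq> T closure_of (tsp - TRF)"
    using closure_branch[OF i] closure_of_mono by metis
  then show "y \<in> X" unfolding Xset_def using t retr_branch_bounds[OF i t(1)] y by auto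
qed

section \<open>Partition elements and cylinders\<close>

definition segment :: "'a set \<Rightarrow> 'i \<Rightarrow> real \<Rightarrow> real \<Rightarrow> bool" where
  "segment A i a b \<longleftrightarrow> i \<in> \<Lambda> \<and> 0 \<le> a \<and> a \<le> b \<and> b \<le> 1 \<and> A = \<phi> i ` {a..b}"

lemma finite_P: "finite P"
  using partition by (simp add: basic_partition_def)

lemma P_disjoint: "A \<in> P \<Longrightarrow> B \<in> P \<Longrightarrow> A \<noteq> B \<Longrightarrow> A \<inter> B = {}"
  using partition by (auto simp: basic_partition_def pairwise_def disjnt_def)

lemma P_segment: assumes "A \<in> P" shows "\<exists>i a b. segment A i a b"
proof -
  have "\<exists>i\<in>\<Lambda>. \<exists>a b. 0 \<le> a \<and> a \<le> b \<and> b \<le> 1 \<and> A = \<phi> i ` {a..b}"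
    using partition assms unfolding basic_partition_def by blast
  then show ?thesis unfolding segment_def by blast
qed

lemma lab_in_Lambda: "A \<in> P \<Longrightarrow> lab A \<in> \<Lambda>"
  using partition by (simp add: basic_partition_def)

lemma F_image_P: "A \<in> P \<Longrightarrow> F ` A \<subseteq> (sh (p A) ` branch (lab A)) \<union> int_TR"
  using partition by (simp add: basic_partition_def)

lemma F_pmin: "A \<in> P \<Longrightarrow> F (pmin \<Lambda> \<phi> A) = sh (p A) (\<phi> (lab A) 0)"
  using partition by (simp add: basic_partition_def)

lemma F_outside_P: "x \<in> X \<Longrightarrow> x \<notin> \<Union>P \<Longrightarrow> F x \<notin> zsh_set T \<tau> X"
  using partition unfolding basic_partition_def by blast

lemma segment_subset_branch: "segment A i a b \<Longrightarrow> A \<subseteq> branch i"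
  by (auto simp: segment_def)

lemma segment_unique:
  assumes s1: "segment A i a b" and s2: "segment A j c d"
  shows "i = j \<and> a = c \<and> b = d"
proof -
  have ij: "i = j"
  proof (rule ccontr)
    assume ne: "i \<noteq> j"
    have "\<phi> i a \<in> A" using s1 by (auto simp: segment_def)
    then have "\<phi> i a \<in> branch i \<inter> branch j" using segment_subset_branch[OF s1] segment_subset_branch[OF s2] by blast
    moreover have "i \<in> \<Lambda>" "j \<in> \<Lambda>" using s1 s2 by (auto simp: segment_def)
    ultimately show False using branches_disjoint ne by blast
  qed
  have "\<phi> i ` {a..b} = \<phi> i ` {c..d}" using s1 s2 ij by (simp add: segment_def)
  moreover have "{a..b} \<subseteq> {0..1}" "{c..d} \<subseteq> {0..1}" using s1 s2 by (auto simp: segment_def)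
  ultimately have "{a..b} = {c..d}"
    using inj_on_image_eq_iff[OF inj_on_phi] s1 by (auto simp: segment_def)
  then have "a = c \<and> b = d" using s1 s2 by (simp add: segment_def)
  then show ?thesis using ij by simp
qed

definition branch_of :: "'a set \<Rightarrow> 'i" where
  "branch_of A = (THE i. \<exists>a b. segment A i a b)"

definition lo :: "'a set \<Rightarrow> real" where
  "lo A = (THE a. \<exists>i b. segment A i a b)"

definition hi :: "'a set \<Rightarrow> real" where
  "hi A = (THE b. \<exists>i a. segment A i a b)"

lemma segment_P: assumes "A \<in> P" shows "segment A (branch_of A) (lo A) (hi A)"
proof -
  obtain i a b where s: "segment A i a b" using P_segment[OF assms] by blast
  have "branch_of A = i" unfolding branch_of_def
    by (rule the_equality) (use s segment_unique in blast)+
  moreover have "lo A = a" unfolding lo_def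
    by (rule the_equality) (use s segment_unique in blast)+
  moreover have "hi A = b" unfolding hi_def
    by (rule the_equality) (use s segment_unique in blast)+
  ultimately show ?thesis using s by simp
qed

lemma segment_P_eq: "A \<in> P \<Longrightarrow> segment A i a b \<Longrightarrow> i = branch_of A \<and> a = lo A \<and> b = hi A"
  using segment_P segment_unique by blast

lemma branch_of_in_Lambda: "A \<in> P \<Longrightarrow> branch_of A \<in> \<Lambda>"
  using segment_P by (simp add: segment_def)

lemma P_eq_segment: "A \<in> P \<Longrightarrow> A = \<phi> (branch_of A) ` {lo A..hi A}"
  using segment_P by (simp add: segment_def)

lemma lo_hi: "A \<in> P \<Longrightarrow> 0 \<le> lo A \<and> lo A \<le> hi A \<and> hi A \<le> 1"
  using segment_P by (simp add: segment_def)

lemma P_subset_branch: "A \<in> P \<Longrightarrow> A \<subseteq> branch (branch_of A)"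
  using segment_P segment_subset_branch by blast

lemma P_subset_X: "A \<in> P \<Longrightarrow> A \<subseteq> X"
  using P_subset_branch branch_subset_X branch_of_in_Lambda by blast

lemma P_in_top: "A \<in> P \<Longrightarrow> A \<subseteq> tsp"
  using P_subset_X X_in_top by blast

lemma pmin_P: assumes "A \<in> P" shows "pmin \<Lambda> \<phi> A = \<phi> (branch_of A) (lo A)"
proof -
  have s: "segment A (branch_of A) (lo A) (hi A)" using segment_P[OF assms] .
  show ?thesis unfolding pmin_def
  proof (rule the_equality)
    show "\<exists>i\<in>\<Lambda>. \<exists>a b. 0 \<le> a \<and> a \<le> b \<and> b \<le> 1 \<and> A = \<phi> i ` {a..b} \<and> \<phi> (branch_of A) (lo A) = \<phi> i a"
      using s by (auto simp: segment_def)
  next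
    fix y assume "\<exists>i\<in>\<Lambda>. \<exists>a b. 0 \<le> a \<and> a \<le> b \<and> b \<le> 1 \<and> A = \<phi> i ` {a..b} \<and> y = \<phi> i a"
    then obtain i a b where "segment A i a b" "y = \<phi> i a" by (auto simp: segment_def)
    then show "y = \<phi> (branch_of A) (lo A)" using segment_P_eq[OF assms] by blast
  qed
qed

text \<open>On \<open>A\<close>, \<open>F\<close> maps into the branch \<open>X\<^bsup>lab A\<^esup>\<close> translated by \<open>p A\<close> or into the
  interior of \<open>T\<^sub>\<real>\<close>; \<open>FX A\<close> undoes the translation.\<close>
definition FX :: "'a set \<Rightarrow> 'a \<Rightarrow> 'a" where
  "FX A z = sh (- p A) (F z)"

lemma FX_in_top: "z \<in> tsp \<Longrightarrow> FX A z \<in> tsp"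
  by (simp add: FX_def F_in_top sh_in_top)

lemma continuous_FX: "continuous_map T T (FX A)"
proof -
  have "continuous_map T T (sh (- p A) \<circ> F)"
    using continuous_map_compose[OF F_cont homeomorphic_imp_continuous_map[OF homeomorphic_sh]] .
  moreover have "FX A = sh (- p A) \<circ> F" by (rule ext) (simp add: FX_def)
  ultimately show ?thesis by simp
qed

lemma FX_image: assumes "A \<in> P" "z \<in> A" shows "FX A z \<in> branch (lab A) \<union> int_TR"
proof -
  have "F z \<in> (sh (p A) ` branch (lab A)) \<union> int_TR" using F_image_P[OF assms(1)] assms(2) by blast
  then consider "F z \<in> sh (p A) ` branch (lab A)" | "F z \<in> int_TR" by blast
  moreover have zt: "z \<in> tsp" using P_in_top assms by blast
  ultimately show ?thesis
  proof cases
    assume "F z \<in> sh (p A) ` branch (lab A)"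
    then obtain y where y: "y \<in> branch (lab A)" "F z = sh (p A) y" by blast
    then have "y \<in> tsp" using branch_in_top lab_in_Lambda assms by blast
    then show ?thesis using y by (simp add: FX_def sh_add)
  next
    assume "F z \<in> int_TR"
    then show ?thesis using sh_in_int_TR_iff F_in_top zt by (simp add: FX_def)
  qed
qed

lemma FX_lo: assumes "A \<in> P" shows "FX A (\<phi> (branch_of A) (lo A)) = \<phi> (lab A) 0"
proof -
  have "\<phi> (lab A) 0 \<in> branch (lab A)" by simp
  then have "\<phi> (lab A) 0 \<in> tsp" using branch_in_top[OF lab_in_Lambda[OF assms]] by blast
  then show ?thesis using F_pmin[OF assms] pmin_P[OF assms] by (simp add: FX_def sh_add)
qed

lemma sh_F_in_X_eq_FX:
  assumes "A \<in> P" "z \<in> A" "sh m (F z) \<in> X"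
  shows "sh m (F z) = FX A z \<and> FX A z \<in> branch (lab A)"
proof -
  have zt: "z \<in> tsp" using P_in_top assms by blast
  have "F z \<in> (sh (p A) ` branch (lab A)) \<union> int_TR" using F_image_P[OF assms(1)] assms(2) by blast
  moreover have "F z \<notin> int_TR"
  proof
    assume "F z \<in> int_TR" then have "sh m (F z) \<in> int_TR" using sh_in_int_TR_iff F_in_top zt by blast
    then show False using assms(3) X_not_int_TR by blast
  qed
  ultimately obtain y where y: "y \<in> branch (lab A)" "F z = sh (p A) y" by blast
  then have yX: "y \<in> X" using branch_subset_X lab_in_Lambda assms by blast
  then have yt: "y \<in> tsp" using X_in_top by blast
  have "sh (m + p A) y \<in> X" using assms(3) y yt by (simp add: sh_add)
  then have "sh (m + p A) y = sh 0 (sh (m + p A) y)" by simp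
  then have "m + p A = 0" using sh_X_unique[OF yX, of "sh (m + p A) y" "m + p A" 0] \<open>sh (m + p A) y \<in> X\<close> by simp
  then have "m = - p A" by simp
  then show ?thesis using y yt by (simp add: FX_def sh_add)
qed

lemma sh_zsh_set: assumes "S \<subseteq> tsp" "z \<in> zsh_set T \<tau> S" shows "sh k z \<in> zsh_set T \<tau> S"
proof -
  obtain m a where a: "a \<in> S" "z = sh m a" using assms(2) unfolding zsh_set_def by blast
  then have "sh k z = sh (k + m) a" using sh_add assms(1) by blast
  then show ?thesis using a(1) unfolding zsh_set_def by blast
qed

lemma zsh_set_Int_X: assumes S: "S \<subseteq> X" shows "zsh_set T \<tau> S \<inter> X = S"
proof
  show "zsh_set T \<tau> S \<inter> X \<subseteq> S"
  proof
    fix z assume z: "z \<in> zsh_set T \<tau> S \<inter> X"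
    then obtain m a where a: "a \<in> S" "z = sh m a" unfolding zsh_set_def by blast
    have aX: "a \<in> X" using a(1) S by blast
    have zX: "z \<in> X" using z by blast
    have "sh m a = sh 0 z" using a(2) by simp
    then have "m = 0" by (rule sh_X_unique[OF aX zX])
    then show "z \<in> S" using a by simp
  qed
  show "S \<subseteq> zsh_set T \<tau> S \<inter> X"
  proof
    fix z assume "z \<in> S"
    moreover have "z = sh 0 z" by simp
    ultimately have "z \<in> zsh_set T \<tau> S" unfolding zsh_set_def by blast
    then show "z \<in> zsh_set T \<tau> S \<inter> X" using S \<open>z \<in> S\<close> by blast
  qed
qed

definition itin :: "'a set list \<Rightarrow> 'a set" where
  "itin w = {x\<in>tsp. \<forall>i<length w. (F ^^ i) x \<in> zsh_set T \<tau> (w ! i)}"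

lemma cyl_itin: "cyl T h \<tau> F w = (F ^^ (length w - 1)) ` itin w \<inter> X"
  by (simp add: cyl_def itin_def)

lemma words_nth: "w \<in> words P \<Longrightarrow> i < length w \<Longrightarrow> w ! i \<in> P"
  by (auto simp: words_def)

lemma sh_itin: assumes "w \<in> words P" "x \<in> itin w" shows "sh k x \<in> itin w"
proof -
  have xt: "x \<in> tsp" using assms by (simp add: itin_def)
  { fix i assume i: "i < length w"
    then have "(F ^^ i) x \<in> zsh_set T \<tau> (w ! i)" using assms by (simp add: itin_def)
    then have "sh k ((F ^^ i) x) \<in> zsh_set T \<tau> (w ! i)"
      using sh_zsh_set P_in_top words_nth[OF assms(1) i] by blast
    then have "(F ^^ i) (sh k x) \<in> zsh_set T \<tau> (w ! i)" using Fpow_sh_commute xt by simp }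
  then show ?thesis using xt sh_in_top by (simp add: itin_def)
qed

lemma cyl_subset_last: assumes "w \<in> words P" shows "cyl T h \<tau> F w \<subseteq> last w"
proof
  fix y assume "y \<in> cyl T h \<tau> F w"
  then obtain x where x: "x \<in> itin w" "y = (F ^^ (length w - 1)) x" "y \<in> X"
    unfolding cyl_itin by blast
  have lw: "length w - 1 < length w" "last w = w ! (length w - 1)"
    using assms by (auto simp: words_def last_conv_nth)
  then have "y \<in> zsh_set T \<tau> (last w)" using x by (simp add: itin_def)
  moreover have "last w \<in> P" using words_nth[OF assms] lw by simp
  ultimately show "y \<in> last w" using zsh_set_Int_X[OF P_subset_X] x by blast
qed

lemma cyl_singleton: assumes "A \<in> P" shows "cyl T h \<tau> F [A] = A"
proof -
  have "itin [A] = tsp \<inter> zsh_set T \<tau> A" by (auto simp: itin_def)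
  then have "cyl T h \<tau> F [A] = tsp \<inter> zsh_set T \<tau> A \<inter> X" by (simp add: cyl_itin)
  also have "\<dots> = A" using zsh_set_Int_X[OF P_subset_X[OF assms]] X_in_top by blast
  finally show ?thesis .
qed

lemma Fpow_itin:
  assumes u: "u \<in> words P"
  shows "(F ^^ (length u - 1)) ` itin u = {sh m y | m y. y \<in> cyl T h \<tau> F u}"
proof
  let ?n = "length u - 1"
  have lw: "?n < length u" "last u = u ! ?n" using u by (auto simp: words_def last_conv_nth)
  have lP: "last u \<in> P" using words_nth[OF u] lw by simp
  show "(F ^^ ?n) ` itin u \<subseteq> {sh m y | m y. y \<in> cyl T h \<tau> F u}"
  proof
    fix z assume "z \<in> (F ^^ ?n) ` itin u"
    then obtain x where x: "x \<in> itin u" "z = (F ^^ ?n) x" by blast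
    have xt: "x \<in> tsp" using x by (simp add: itin_def)
    have "z \<in> zsh_set T \<tau> (last u)" using x lw by (simp add: itin_def)
    then obtain m a where a: "a \<in> last u" "z = sh m a" unfolding zsh_set_def by blast
    have at: "a \<in> tsp" using P_in_top lP a by blast
    have "sh (-m) x \<in> itin u" using sh_itin[OF u x(1)] .
    moreover have "(F ^^ ?n) (sh (-m) x) = a"
      using Fpow_sh_commute xt x a at sh_cancel by (metis add.inverse_inverse)
    moreover have "a \<in> X" using P_subset_X lP a by blast
    ultimately have "a \<in> cyl T h \<tau> F u" unfolding cyl_itin by (metis IntI image_eqI)
    then show "z \<in> {sh m y | m y. y \<in> cyl T h \<tau> F u}" using a by blast
  qed
  show "{sh m y | m y. y \<in> cyl T h \<tau> F u} \<subseteq> (F ^^ ?n) ` itin u"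
  proof
    fix z assume "z \<in> {sh m y | m y. y \<in> cyl T h \<tau> F u}"
    then obtain m y where y: "y \<in> cyl T h \<tau> F u" "z = sh m y" by blast
    then obtain x where x: "x \<in> itin u" "y = (F ^^ ?n) x" unfolding cyl_itin by blast
    have xt: "x \<in> tsp" using x by (simp add: itin_def)
    have "z = (F ^^ ?n) (sh m x)" using y x Fpow_sh_commute xt by simp
    then show "z \<in> (F ^^ ?n) ` itin u" using sh_itin[OF u x(1)] by blast
  qed
qed

abbreviation "cylinder \<equiv> cyl T h \<tau> F"

lemma cyl_snoc:
  assumes u: "u \<in> words P" and B: "B \<in> P"
  shows "cylinder (u @ [B]) = B \<inter> FX (last u) ` cylinder u"
proof
  let ?n = "length u - 1"
  have lu: "?n < length u" "last u = u ! ?n" "length u = Suc ?n" using u by (auto simp: words_def last_conv_nth)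
  have A: "last u \<in> P" using words_nth[OF u] lu by simp
  have uB: "u @ [B] \<in> words P" using u B by (auto simp: words_def)
  have SwB: "itin (u @ [B]) = {x \<in> itin u. (F ^^ Suc ?n) x \<in> zsh_set T \<tau> B}"
  proof -
    have "\<And>x. (\<forall>i<length (u @ [B]). (F ^^ i) x \<in> zsh_set T \<tau> ((u @ [B]) ! i)) \<longleftrightarrow>
       (\<forall>i<length u. (F ^^ i) x \<in> zsh_set T \<tau> (u ! i)) \<and> (F ^^ Suc ?n) x \<in> zsh_set T \<tau> B"
      using lu by (auto simp: nth_append less_Suc_eq)
    then show ?thesis by (auto simp: itin_def)
  qed
  have lenB: "length (u @ [B]) - 1 = Suc ?n" using lu by simp
  show "cylinder (u @ [B]) \<subseteq> B \<inter> FX (last u) ` cylinder u"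
  proof
    fix y assume "y \<in> cylinder (u @ [B])"
    then obtain x where x: "x \<in> itin u" "(F ^^ Suc ?n) x \<in> zsh_set T \<tau> B" "y = (F ^^ Suc ?n) x" "y \<in> X"
      unfolding cyl_itin lenB SwB by blast
    have "(F ^^ ?n) x \<in> (F ^^ ?n) ` itin u" using x by blast
    then obtain m z where z: "z \<in> cylinder u" "(F ^^ ?n) x = sh m z" using Fpow_itin[OF u] by blast
    have zA: "z \<in> last u" using cyl_subset_last[OF u] z by blast
    have zt: "z \<in> tsp" using P_in_top A zA by blast
    have y1: "y = sh m (F z)" using x z zt by (simp add: F_sh_commute)
    have "y \<in> B" using zsh_set_Int_X[OF P_subset_X[OF B]] x by blast
    moreover have "y = FX (last u) z" using sh_F_in_X_eq_FX[OF A zA] y1 x(4) by simp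
    ultimately show "y \<in> B \<inter> FX (last u) ` cylinder u" using z by blast
  qed
  show "B \<inter> FX (last u) ` cylinder u \<subseteq> cylinder (u @ [B])"
  proof
    fix y assume y: "y \<in> B \<inter> FX (last u) ` cylinder u"
    then obtain z where z: "z \<in> cylinder u" "y = FX (last u) z" by blast
    then obtain x where x: "x \<in> itin u" "z = (F ^^ ?n) x" unfolding cyl_itin by blast
    have xt: "x \<in> tsp" using x by (simp add: itin_def)
    let ?x = "sh (- p (last u)) x"
    have x1: "?x \<in> itin u" using sh_itin[OF u x(1)] .
    have "(F ^^ Suc ?n) ?x = y"
      using xt z x by (simp add: Fpow_sh_commute F_sh_commute Fpow_in_top FX_def)
    moreover have "y \<in> zsh_set T \<tau> B"
      using y zsh_set_Int_X[OF P_subset_X[OF B]] by blast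
    moreover have "y \<in> X" using y P_subset_X[OF B] by blast
    ultimately show "y \<in> cylinder (u @ [B])"
      unfolding cyl_itin lenB SwB using x1 by (metis (mono_tags, lifting) IntI image_eqI mem_Collect_eq)
  qed
qed

lemma cyl_append_cong:
  assumes u1: "u1 \<in> words P" and u2: "u2 \<in> words P"
    and c: "cylinder u1 = cylinder u2" and l: "last u1 = last u2" and s: "set s \<subseteq> P"
  shows "cylinder (u1 @ s) = cylinder (u2 @ s) \<and> last (u1 @ s) = last (u2 @ s)"
  using s
proof (induction s rule: rev_induct)
  case Nil then show ?case using c l by simp
next
  case (snoc B s)
  then have IH: "cylinder (u1 @ s) = cylinder (u2 @ s)" "last (u1 @ s) = last (u2 @ s)" and B: "B \<in> P" by auto
  have w1: "u1 @ s \<in> words P" "u2 @ s \<in> words P" using u1 u2 snoc.prems by (auto simp: words_def)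
  have "cylinder (u1 @ s @ [B]) = cylinder (u2 @ s @ [B])"
    using cyl_snoc[OF w1(1) B] cyl_snoc[OF w1(2) B] IH by simp
  then show ?case by simp
qed

lemma simrel_cyl_eq:
  assumes w: "w \<in> words P" and v: "v \<in> words P" and r: "simrel T h \<tau> F w v"
  shows "cylinder w = cylinder v"
proof -
  obtain k where k: "k \<le> min (length w - 1) (length v - 1)"
    and suf: "\<forall>i\<le>k. w ! (length w - 1 - i) = v ! (length v - 1 - i)"
    and c1: "cylinder (take (length w - k) w) = w ! (length w - 1 - k)"
    and e: "w ! (length w - 1 - k) = v ! (length v - 1 - k)"
    and c2: "cylinder (take (length v - k) v) = v ! (length v - 1 - k)"
    using r by (auto simp: simrel_def)
  have lw: "length w \<ge> 1" "length v \<ge> 1" using w v by (auto simp: words_def Suc_le_eq)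
  define j where "j = length w - k"
  define j' where "j' = length v - k"
  have j: "j \<ge> 1" "j' \<ge> 1" "j \<le> length w" "j' \<le> length v" using k lw by (auto simp: j_def j'_def)
  define w1 where "w1 = take j w"
  define v1 where "v1 = take j' v"
  have dw: "drop j w = drop j' v"
  proof (rule nth_equalityI)
    show "length (drop j w) = length (drop j' v)" using j k lw by (simp add: j_def j'_def)
    fix i assume "i < length (drop j w)"
    then have i: "i < k" using j lw k by (simp add: j_def)
    have "w ! (length w - 1 - (k - 1 - i)) = v ! (length v - 1 - (k - 1 - i))"
      by (rule suf[rule_format]) simp
    moreover have "length w - 1 - (k - 1 - i) = j + i" "length v - 1 - (k - 1 - i) = j' + i"
      using i k lw unfolding j_def j'_def by linarith+
    ultimately show "drop j w ! i = drop j' v ! i" using j by simp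
  qed
  have w1w: "w1 \<in> words P" "v1 \<in> words P"
    using w v j by (auto simp: words_def w1_def v1_def dest: in_set_takeD)
  have tn: "take j w \<noteq> []" "take j' v \<noteq> []" using j lw by auto
  have lastw1: "last w1 = w ! (j - 1)" "last v1 = v ! (j' - 1)"
    unfolding w1_def v1_def using last_conv_nth[OF tn(1)] last_conv_nth[OF tn(2)] j
    by (simp_all add: min_def)
  have jj: "length w - 1 - k = j - 1" "length v - 1 - k = j' - 1" by (simp_all add: j_def j'_def)
  have "cylinder w1 = cylinder v1" "last w1 = last v1"
    using c1 c2 e lastw1 jj by (simp_all add: w1_def v1_def j_def j'_def)
  moreover have "set (drop j w) \<subseteq> P" using w by (auto simp: words_def dest: in_set_dropD)
  ultimately have "cylinder (w1 @ drop j w) = cylinder (v1 @ drop j w)"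
    using cyl_append_cong[OF w1w] by blast
  moreover have "w1 @ drop j w = w" by (simp add: w1_def)
  moreover have "v1 @ drop j w = v" using dw by (simp add: v1_def)
  ultimately show ?thesis by simp
qed

abbreviation "sim \<equiv> simeq T h \<tau> F P"
abbreviation "vclass \<equiv> cls T h \<tau> F P"

lemma simeq_cyl_eq:
  assumes "sim w v" and w: "w \<in> words P"
  shows "v \<in> words P \<and> cylinder v = cylinder w"
  using assms(1) unfolding simeq_def
proof (induction rule: equivclp_induct)
  case base then show ?case using w by simp
next
  case (step y z)
  then show ?case using simrel_cyl_eq by metis
qed

lemma vclass_self: "w \<in> words P \<Longrightarrow> w \<in> vclass w"
  by (simp add: cls_def simeq_def)

lemma vclass_cyl_eq: "w \<in> words P \<Longrightarrow> v \<in> vclass w \<Longrightarrow> cylinder v = cylinder w"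
  using simeq_cyl_eq by (auto simp: cls_def)

lemma vclass_eq_imp_cyl_eq: "w \<in> words P \<Longrightarrow> v \<in> words P \<Longrightarrow> vclass w = vclass v \<Longrightarrow> cylinder w = cylinder v"
  using vclass_self vclass_cyl_eq by metis

lemma simeq_vclass_eq: "sim w v \<Longrightarrow> vclass w = vclass v"
proof -
  assume a: "sim w v"
  have "\<And>u. sim w u \<longleftrightarrow> sim v u"
    using a unfolding simeq_def by (meson equivclp_sym equivclp_trans)
  then show ?thesis by (simp add: cls_def)
qed

lemma vcyl_vclass: assumes "w \<in> words P" shows "vcyl T h \<tau> F (vclass w) = cylinder w"
proof -
  have "\<exists>v. v \<in> vclass w" using vclass_self[OF assms] by blast
  then have "(SOME v. v \<in> vclass w) \<in> vclass w" by (rule someI_ex)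
  then show ?thesis using vclass_cyl_eq[OF assms] by (simp add: vcyl_def)
qed

definition velem :: "'a set list set \<Rightarrow> 'a set" where
  "velem \<alpha> = (THE A. A \<in> P \<and> vcyl T h \<tau> F \<alpha> \<subseteq> A)"

lemma velem_vclass:
  assumes w: "w \<in> words P" and ne: "cylinder w \<noteq> {}"
  shows "velem (vclass w) = last w"
proof -
  have lP: "last w \<in> P" using w by (auto simp: words_def dest: last_in_set)
  show ?thesis unfolding velem_def vcyl_vclass[OF w]
  proof (rule the_equality)
    show "last w \<in> P \<and> cylinder w \<subseteq> last w" using lP cyl_subset_last[OF w] by simp
    fix A assume "A \<in> P \<and> cylinder w \<subseteq> A"
    then show "A = last w" using P_disjoint[of A "last w"] lP cyl_subset_last[OF w] ne by blast
  qed
qed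

lemma vweight_velem: "vweight T h \<tau> F P p \<alpha> = p (velem \<alpha>)"
  by (simp add: vweight_def velem_def)

lemma vertex_vclass: "\<alpha> \<in> vertices T h \<tau> F P \<Longrightarrow> \<exists>w. w \<in> words P \<and> cylinder w \<noteq> {} \<and> \<alpha> = vclass w"
  by (auto simp: vertices_def)

lemma arrow_rep:
  assumes "arrow T h \<tau> F P \<alpha> \<beta>"
  shows "\<exists>w A. w \<in> words P \<and> A \<in> P \<and> \<alpha> = vclass w \<and> \<beta> = vclass (w @ [A]) \<and> cylinder w \<noteq> {} \<and> cylinder (w @ [A]) \<noteq> {}"
proof -
  obtain w A where wA: "w \<in> words P" "A \<in> P" "\<alpha> = vclass w" "\<beta> = vclass (w @ [A])"
    using assms by (auto simp: arrow_def)
  have wA': "w @ [A] \<in> words P" using wA by (auto simp: words_def)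
  have vv: "\<alpha> \<in> vertices T h \<tau> F P" "\<beta> \<in> vertices T h \<tau> F P"
    using assms by (simp_all add: arrow_def)
  obtain w0 where w0: "w0 \<in> words P" "cylinder w0 \<noteq> {}" "\<alpha> = vclass w0"
    using vertex_vclass[OF vv(1)] by blast
  obtain w1 where w1: "w1 \<in> words P" "cylinder w1 \<noteq> {}" "\<beta> = vclass w1"
    using vertex_vclass[OF vv(2)] by blast
  have "cylinder w = cylinder w0" using vclass_eq_imp_cyl_eq[OF wA(1) w0(1)] wA w0 by simp
  moreover have "cylinder (w @ [A]) = cylinder w1" using vclass_eq_imp_cyl_eq[OF wA' w1(1)] wA w1 by simp
  ultimately show ?thesis using wA w0 w1 by (intro exI[of _ w] exI[of _ A]) auto
qed

lemma arrow_props: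
  assumes "arrow T h \<tau> F P \<alpha> \<beta>"
  shows "velem \<alpha> \<in> P \<and> velem \<beta> \<in> P \<and> vcyl T h \<tau> F \<alpha> \<noteq> {} \<and> vcyl T h \<tau> F \<beta> \<noteq> {}
    \<and> vcyl T h \<tau> F \<alpha> \<subseteq> velem \<alpha> \<and> vcyl T h \<tau> F \<beta> \<subseteq> velem \<beta>
    \<and> vcyl T h \<tau> F \<beta> = velem \<beta> \<inter> FX (velem \<alpha>) ` vcyl T h \<tau> F \<alpha>"
proof -
  obtain w A where wA: "w \<in> words P" "A \<in> P" "\<alpha> = vclass w" "\<beta> = vclass (w @ [A])" "cylinder w \<noteq> {}" "cylinder (w @ [A]) \<noteq> {}"
    using arrow_rep[OF assms] by blast
  have wA': "w @ [A] \<in> words P" using wA by (auto simp: words_def)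
  have lP: "last w \<in> P" using wA by (auto simp: words_def dest: last_in_set)
  have e1: "velem \<alpha> = last w" "velem \<beta> = A"
    using velem_vclass[OF wA(1) wA(5)] velem_vclass[OF wA' wA(6)] wA by auto
  have e2: "vcyl T h \<tau> F \<alpha> = cylinder w" "vcyl T h \<tau> F \<beta> = cylinder (w @ [A])"
    using vcyl_vclass wA wA' by auto
  show ?thesis unfolding e1 e2
    using cyl_snoc[OF wA(1) wA(2)] lP wA cyl_subset_last[OF wA(1)] by auto
qed

section \<open>Rotation numbers of paths and of points of \<open>X\<^sup>\<infinity>\<close>\<close>

lemma sh_F_in_X_shift:
  assumes A: "A \<in> P" and z: "z \<in> A" and k: "sh k (F z) \<in> X"
  shows "k = - p A"
proof -
  have g: "sh k (F z) = FX A z" "FX A z \<in> branch (lab A)" using sh_F_in_X_eq_FX[OF A z k] by auto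
  have gX: "FX A z \<in> X" using g branch_subset_X lab_in_Lambda A by blast
  have zt: "z \<in> tsp" using P_in_top A z by blast
  have Ft: "F z \<in> tsp" using F_in_top zt by blast
  have e1: "F z = sh (-k) (FX A z)" using g(1) Ft sh_cancel by (metis add.inverse_inverse)
  have e2: "F z = sh (p A) (FX A z)" using Ft sh_add by (simp add: FX_def)
  have "sh (-k) (FX A z) = sh (p A) (FX A z)" using e1 e2 by simp
  then have "-k = p A" by (rule sh_X_unique[OF gX gX])
  then show ?thesis by simp
qed

abbreviation "XI \<equiv> Xinf T h \<tau> F"

lemma Xinf_subset_X: "x \<in> XI \<Longrightarrow> x \<in> X"
  by (simp add: Xinf_def)

lemma Xinf_itinerary_step:
  assumes x: "x \<in> XI"
  shows "\<exists>A m y. A \<in> P \<and> y \<in> A \<and> (F ^^ n) x = sh m y"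
proof -
  have xt: "x \<in> tsp" using x Xinf_subset_X X_in_top by blast
  have "(F ^^ n) x \<in> zsh_set T \<tau> X" using x by (simp add: Xinf_def)
  then obtain m y where y: "y \<in> X" "(F ^^ n) x = sh m y" unfolding zsh_set_def by blast
  have "(F ^^ Suc n) x \<in> zsh_set T \<tau> X" using x unfolding Xinf_def by blast
  then have "sh (-m) ((F ^^ Suc n) x) \<in> zsh_set T \<tau> X"
    using sh_zsh_set X_in_top by blast
  moreover have "sh (-m) ((F ^^ Suc n) x) = F y"
    using y X_in_top F_sh_commute by (simp add: sh_add F_in_top)
  ultimately have "F y \<in> zsh_set T \<tau> X" by simp
  then have "y \<in> \<Union>P" using F_outside_P y by blast
  then show ?thesis using y by blast
qed

lemma Xinf_itinerary:
  assumes x: "x \<in> XI"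
  obtains A y where "\<And>n. A n \<in> P" "\<And>n. y n \<in> A n"
    "\<And>n. (F ^^ n) x = sh (\<Sum>k<n. p (A k)) (y n)"
proof -
  have "\<forall>n. \<exists>A m y. A \<in> P \<and> y \<in> A \<and> (F ^^ n) x = sh m y" using Xinf_itinerary_step[OF x] by blast
  then obtain A m y where Amy: "\<And>n. A n \<in> P" "\<And>n. y n \<in> A n" "\<And>n. (F ^^ n) x = sh (m n) (y n)"
    by metis
  have yX: "\<And>n. y n \<in> X" using Amy P_subset_X by blast
  have yt: "\<And>n. y n \<in> tsp" using yX X_in_top by blast
  have "sh (m 0) (y 0) = sh 0 x" using Amy(3)[of 0] by simp
  then have m0: "m 0 = 0" using sh_X_unique[OF yX Xinf_subset_X[OF x]] by blast
  have step: "m (Suc n) = m n + p (A n)" for n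
  proof -
    have "sh (m (Suc n)) (y (Suc n)) = sh (m n) (F (y n))"
      using Amy(3)[of "Suc n"] Amy(3)[of n] yt by (simp add: F_sh_commute)
    then have "y (Suc n) = sh (- m (Suc n)) (sh (m n) (F (y n)))"
      using sh_cancel yt by metis
    also have "\<dots> = sh (m n - m (Suc n)) (F (y n))" using yt F_in_top sh_add by simp
    finally have "sh (m n - m (Suc n)) (F (y n)) \<in> X" using yX by metis
    then show ?thesis using sh_F_in_X_shift[OF Amy(1) Amy(2)] by force
  qed
  have msum: "m n = (\<Sum>k<n. p (A k))" for n
    by (induction n) (simp_all add: m0 step)
  show ?thesis by (rule that[OF Amy(1,2)]) (simp add: Amy(3) msum)
qed

lemma itinerary_path:
  assumes A: "\<And>n. A n \<in> P" and y: "\<And>n. y n \<in> A n"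
    and orbit: "\<And>n. (F ^^ n) x = sh (\<Sum>k<n. p (A k)) (y n)"
  shows "inf_path T h \<tau> F P (\<lambda>n. vclass (map A [0..<Suc n]))"
    and "vweight T h \<tau> F P p (vclass (map A [0..<Suc n])) = p (A n)"
proof -
  define w where "w n = map A [0..<Suc n]" for n
  define M where "M n = (\<Sum>k<n. p (A k))" for n
  have ww: "\<And>n. w n \<in> words P" using A by (auto simp: w_def words_def)
  have yt: "\<And>n. y n \<in> tsp" using A y P_in_top by blast
  have xt: "x \<in> tsp" using orbit[of 0] yt sh_in_top by (metis funpow_0)
  have ycyl: "y n \<in> cylinder (w n)" for n
  proof -
    let ?x = "sh (- M n) x"
    have "(F ^^ i) ?x \<in> zsh_set T \<tau> (w n ! i)" if "i < length (w n)" for i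
    proof -
      have "(F ^^ i) ?x = sh (- M n + M i) (y i)"
        using Fpow_sh_commute xt orbit yt sh_add by (simp add: M_def)
      then show ?thesis using that y[of i] unfolding zsh_set_def by (auto simp: w_def simp del: upt_Suc)
    qed
    then have "?x \<in> itin (w n)" using xt sh_in_top by (simp add: itin_def)
    moreover have "(F ^^ (length (w n) - 1)) ?x = y n"
      using Fpow_sh_commute xt orbit yt sh_cancel by (simp add: sh_add w_def M_def)
    moreover have "y n \<in> X" using y A P_subset_X by blast
    ultimately show "y n \<in> cylinder (w n)" unfolding cyl_itin by (metis IntI image_eqI)
  qed
  then have "vclass (w n) \<in> vertices T h \<tau> F P" for n
    using ww unfolding vertices_def by blast
  then show "inf_path T h \<tau> F P (\<lambda>n. vclass (map A [0..<Suc n]))"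
    using ww A unfolding inf_path_def arrow_def w_def by fastforce
  have "cylinder (w n) \<noteq> {}" using ycyl by blast
  then show "vweight T h \<tau> F P p (vclass (map A [0..<Suc n])) = p (A n)"
    using velem_vclass[OF ww] by (simp add: vweight_velem w_def)
qed

lemma has_rot_iff_average_shift:
  assumes orbit: "\<And>n. (F ^^ n) x = sh (M n) (z n)" and z: "\<And>n. z n \<in> X"
  shows "has_rot T h F x r \<longleftrightarrow> (\<lambda>n. real_of_int (M n) / real n) \<longlonglongrightarrow> r"
proof -
  have retr_orbit: "retr ((F ^^ n) x) = retr (z n) + of_int (M n)" for n
    using orbit retr_sh z X_in_top by simp
  have "\<bar>(retr ((F ^^ n) x) - retr x) - real_of_int (M n)\<bar> \<le> 1 + \<bar>real_of_int (M 0)\<bar>" for n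
    using retr_orbit[of n] retr_orbit[of 0] X_retr[OF z[of n]] X_retr[OF z[of 0]] by auto
  then show ?thesis
    unfolding has_rot_def by (rule average_tendsto_iff_bounded_diff)
qed

lemma Rot_Xinf_subset_Rot_graph:
  assumes x: "x \<in> XI" and r: "has_rot T h F x r"
  shows "r \<in> Rot_graph T h \<tau> F P p"
proof -
  obtain A y where A: "\<And>n. A n \<in> P" and y: "\<And>n. y n \<in> A n"
    and orbit: "\<And>n. (F ^^ n) x = sh (\<Sum>k<n. p (A k)) (y n)"
    using Xinf_itinerary[OF x] by blast
  have "(\<lambda>n. real_of_int (\<Sum>k<n. p (A k)) / real n) \<longlonglongrightarrow> r"
    using r has_rot_iff_average_shift[OF orbit] y A P_subset_X by blast
  then show ?thesis
    using itinerary_path[OF A y orbit] unfolding Rot_graph_def path_rot_def by auto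
qed

lemma Hausdorff_branch: assumes "i \<in> \<Lambda>" shows "Hausdorff_space (subtopology T (branch i))"
proof -
  have "top_of_set {0..(1::real)} homeomorphic_space subtopology T (branch i)"
    using homeomorphic_phi[OF assms] homeomorphic_map_imp_homeomorphic_space by blast
  moreover have "Hausdorff_space (top_of_set {0..(1::real)})"
    by (simp add: Hausdorff_space_subtopology)
  ultimately show ?thesis using homeomorphic_Hausdorff_space by blast
qed

lemma compactin_branch_closedin:
  assumes i: "i \<in> \<Lambda>" and K: "compactin T K" "K \<subseteq> branch i"
  shows "closedin T K"
proof -
  have "compactin (subtopology T (branch i)) K" using K by (simp add: compactin_subtopology)
  then have "closedin (subtopology T (branch i)) K"
    using compactin_imp_closedin[OF Hausdorff_branch[OF i]] by blast
  then show ?thesis using closedin_trans_full closedin_branch[OF i] by blast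
qed

lemma compactin_segment:
  assumes i: "i \<in> \<Lambda>" and "0 \<le> c" "d \<le> 1"
  shows "compactin T (\<phi> i ` {c..d})"
proof -
  have "compactin (top_of_set {0..1}) {c..d}"
    using assms by (auto simp: compactin_subtopology)
  then show ?thesis using image_compactin continuous_phi[OF i] by blast
qed

lemma closedin_segment:
  assumes i: "i \<in> \<Lambda>" and "0 \<le> c" "d \<le> 1"
  shows "closedin T (\<phi> i ` {c..d})"
proof (rule compactin_branch_closedin[OF i compactin_segment[OF assms]])
  show "\<phi> i ` {c..d} \<subseteq> branch i" using assms by auto
qed

lemma compactin_P: "A \<in> P \<Longrightarrow> compactin T A"
  using compactin_segment branch_of_in_Lambda lo_hi P_eq_segment by metis

lemma closedin_P: "A \<in> P \<Longrightarrow> closedin T A"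
  using closedin_segment branch_of_in_Lambda lo_hi P_eq_segment by metis

lemma compactin_cyl:
  assumes "w \<in> words P"
  shows "compactin T (cylinder w)"
proof -
  have "set w \<subseteq> P" "w \<noteq> []" using assms by (auto simp: words_def)
  then show ?thesis
  proof (induction w rule: rev_induct)
    case Nil then show ?case by simp
  next
    case (snoc B u)
    show ?case
    proof (cases "u = []")
      case True
      then show ?thesis using cyl_singleton compactin_P snoc by simp
    next
      case False
      then have u: "u \<in> words P" using snoc by (auto simp: words_def)
      have B: "B \<in> P" using snoc by simp
      have "compactin T (cylinder u)" using snoc.IH snoc.prems False by simp
      then have "compactin T (FX (last u) ` cylinder u)" using image_compactin continuous_FX by blast
      then have "compactin T (B \<inter> FX (last u) ` cylinder u)"
        using closed_Int_compactin closedin_P[OF B] by blast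
      then show ?thesis using cyl_snoc[OF u B] by simp
    qed
  qed
qed

lemma closedin_cyl:
  assumes "w \<in> words P"
  shows "closedin T (cylinder w)"
proof -
  have "last w \<in> P" using assms by (auto simp: words_def dest: last_in_set)
  then show ?thesis
    using compactin_branch_closedin[OF branch_of_in_Lambda] compactin_cyl[OF assms] cyl_subset_last[OF assms] P_subset_branch by blast
qed

abbreviation "vcylinder \<equiv> vcyl T h \<tau> F"

lemma vertex_compactin: "\<alpha> \<in> vertices T h \<tau> F P \<Longrightarrow> compactin T (vcylinder \<alpha>) \<and> closedin T (vcylinder \<alpha>)"
  using vertex_vclass vcyl_vclass compactin_cyl closedin_cyl by metis

lemma F_eq_sh_FX: "z \<in> tsp \<Longrightarrow> F z = sh (p A) (FX A z)"
  by (simp add: FX_def sh_add F_in_top)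

lemma continuous_Fpow: "continuous_map T T (F ^^ n)"
proof (induction n)
  case 0 then show ?case by (simp add: id_def[symmetric])
next
  case (Suc n) then show ?case
    using continuous_map_compose[OF Suc F_cont] by (simp only: funpow.simps(2))
qed

definition path_sum :: "(nat \<Rightarrow> 'a set list set) \<Rightarrow> nat \<Rightarrow> int" where
  "path_sum \<alpha> n = (\<Sum>k<n. vweight T h \<tau> F P p (\<alpha> k))"

lemma arrow_vcylinder_subset:
  "arrow T h \<tau> F P \<alpha> \<beta> \<Longrightarrow> vcylinder \<beta> \<subseteq> FX (velem \<alpha>) ` vcylinder \<alpha>"
  using arrow_props by blast

lemma vcylinder_subset_X: "inf_path T h \<tau> F P \<alpha> \<Longrightarrow> vcylinder (\<alpha> n) \<subseteq> X"
  using arrow_props P_subset_X unfolding inf_path_def by blast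

lemma path_prefix_realized:
  assumes path: "inf_path T h \<tau> F P \<alpha>" and y: "y \<in> vcylinder (\<alpha> n)"
  shows "\<exists>x\<in>vcylinder (\<alpha> 0). (\<forall>k\<le>n. (F ^^ k) x \<in> sh (path_sum \<alpha> k) ` vcylinder (\<alpha> k)) \<and>
           (F ^^ n) x = sh (path_sum \<alpha> n) y"
  using y
proof (induction n arbitrary: y)
  case 0 then show ?case by (intro bexI[of _ y]) (auto simp: path_sum_def)
next
  case (Suc n)
  have ar: "arrow T h \<tau> F P (\<alpha> n) (\<alpha> (Suc n))" using path by (simp add: inf_path_def)
  obtain z where z: "z \<in> vcylinder (\<alpha> n)" "y = FX (velem (\<alpha> n)) z"
    using Suc.prems arrow_props[OF ar] by blast
  obtain x where x: "x \<in> vcylinder (\<alpha> 0)" "\<forall>k\<le>n. (F ^^ k) x \<in> sh (path_sum \<alpha> k) ` vcylinder (\<alpha> k)"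
    "(F ^^ n) x = sh (path_sum \<alpha> n) z"
    using Suc.IH[OF z(1)] by blast
  have zt: "z \<in> tsp" using z vcylinder_subset_X[OF path] X_in_top by blast
  have "(F ^^ Suc n) x = sh (path_sum \<alpha> n) (F z)" using x zt by (simp add: F_sh_commute)
  also have "\<dots> = sh (path_sum \<alpha> n) (sh (p (velem (\<alpha> n))) y)" using F_eq_sh_FX[OF zt] z by simp
  also have "\<dots> = sh (path_sum \<alpha> (Suc n)) y"
    using zt FX_in_top z sh_add by (simp add: path_sum_def vweight_velem add.commute)
  finally have eq: "(F ^^ Suc n) x = sh (path_sum \<alpha> (Suc n)) y" .
  then have "(F ^^ Suc n) x \<in> sh (path_sum \<alpha> (Suc n)) ` vcylinder (\<alpha> (Suc n))"
    using Suc.prems by (metis imageI)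
  then have "\<forall>k\<le>Suc n. (F ^^ k) x \<in> sh (path_sum \<alpha> k) ` vcylinder (\<alpha> k)"
    using x(2) by (metis le_Suc_eq)
  then show ?case using x(1) eq by blast
qed

lemma path_realized:
  assumes path: "inf_path T h \<tau> F P \<alpha>"
  shows "\<exists>x\<in>vcylinder (\<alpha> 0). \<forall>n. (F ^^ n) x \<in> sh (path_sum \<alpha> n) ` vcylinder (\<alpha> n)"
proof -
  have ar: "\<And>n. arrow T h \<tau> F P (\<alpha> n) (\<alpha> (Suc n))" using path by (simp add: inf_path_def)
  have vert: "\<And>n. \<alpha> n \<in> vertices T h \<tau> F P" using ar by (simp add: arrow_def)
  have ctop: "\<And>n. vcylinder (\<alpha> n) \<subseteq> tsp" using vcylinder_subset_X[OF path] X_in_top by blast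
  define K where "K n = {x \<in> tsp. \<forall>k\<le>n. (F ^^ k) x \<in> sh (path_sum \<alpha> k) ` vcylinder (\<alpha> k)}" for n
  have "closedin T {x \<in> tsp. (F ^^ k) x \<in> sh (path_sum \<alpha> k) ` vcylinder (\<alpha> k)}" for k
  proof -
    have "closedin T (sh (path_sum \<alpha> k) ` vcylinder (\<alpha> k))"
      using homeomorphic_map_closedness[OF homeomorphic_sh ctop] vertex_compactin[OF vert] by blast
    then show ?thesis using closedin_continuous_map_preimage[OF continuous_Fpow] by blast
  qed
  moreover have "K n = tsp \<inter> (\<Inter>k\<in>{..n}. {x \<in> tsp. (F ^^ k) x \<in> sh (path_sum \<alpha> k) ` vcylinder (\<alpha> k)})" for n
    by (auto simp: K_def)
  ultimately have closed: "closedin T (K n)" for n by (auto intro!: closedin_Inter closedin_Int)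
  have dec: "decseq K" by (auto simp: decseq_def K_def)
  have meets: "vcylinder (\<alpha> 0) \<inter> K n \<noteq> {}" for n
  proof -
    obtain y where "y \<in> vcylinder (\<alpha> n)" using arrow_props[OF ar[of n]] by blast
    then obtain x where "x \<in> vcylinder (\<alpha> 0)"
      and "\<forall>k\<le>n. (F ^^ k) x \<in> sh (path_sum \<alpha> k) ` vcylinder (\<alpha> k)"
      using path_prefix_realized[OF path] by blast
    then show ?thesis using ctop[of 0] by (auto simp: K_def)
  qed
  have "compactin T (vcylinder (\<alpha> 0))" using vertex_compactin[OF vert] by blast
  then have "vcylinder (\<alpha> 0) \<inter> \<Inter>(range K) \<noteq> {}"
    using compactin_Int_decseq_nonempty[OF _ closed dec meets] by blast
  then show ?thesis by (auto simp: K_def)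
qed

lemma Rot_graph_subset_Rot_Xinf:
  assumes path: "inf_path T h \<tau> F P \<alpha>" and r: "path_rot T h \<tau> F P p \<alpha> r"
  shows "r \<in> Rot T h F XI"
proof -
  obtain x where x: "x \<in> vcylinder (\<alpha> 0)"
    and "\<forall>n. \<exists>zn. zn \<in> vcylinder (\<alpha> n) \<and> (F ^^ n) x = sh (path_sum \<alpha> n) zn"
    using path_realized[OF path] by blast
  then obtain z where z: "\<And>n. z n \<in> vcylinder (\<alpha> n)" and orbit: "\<And>n. (F ^^ n) x = sh (path_sum \<alpha> n) (z n)"
    by metis
  have zX: "\<And>n. z n \<in> X" using z vcylinder_subset_X[OF path] by blast
  have "x \<in> XI"
    unfolding Xinf_def zsh_set_def using x vcylinder_subset_X[OF path] orbit zX by blast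
  moreover have "has_rot T h F x r"
    using has_rot_iff_average_shift[OF orbit zX] r by (simp add: path_rot_def path_sum_def)
  ultimately show ?thesis unfolding Rot_def by blast
qed

section \<open>Cylinders are initial segments\<close>

definition phi_inv :: "'i \<Rightarrow> 'a \<Rightarrow> real" where
  "phi_inv l = inv_into {0..1} (\<phi> l)"

text \<open>Collapsing everything off the branch to its root makes \<open>FX_coord\<close> continuous.\<close>
definition onto_branch :: "'i \<Rightarrow> 'a \<Rightarrow> 'a" where
  "onto_branch l y = (if y \<in> branch l then y else \<phi> l 0)"

definition FX_param :: "'a set \<Rightarrow> real \<Rightarrow> 'a" where
  "FX_param A t = FX A (\<phi> (branch_of A) t)"

definition FX_coord :: "'a set \<Rightarrow> real \<Rightarrow> real" where
  "FX_coord A t = phi_inv (lab A) (onto_branch (lab A) (FX_param A t))"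

lemma closedin_root: "l \<in> \<Lambda> \<Longrightarrow> closedin T {\<phi> l 0}"
  using closedin_segment[of l 0 0] by simp

lemma closedin_TR: "closedin T TRF"
  by (simp add: TR_def)

lemma int_TR_subset: "int_TR \<subseteq> TRF"
  by (rule interior_of_subset)

lemma branch_Int_int_TR: "l \<in> \<Lambda> \<Longrightarrow> branch l \<inter> int_TR = {}"
  using branch_subset_X X_not_int_TR by blast

lemma continuous_onto_branch:
  assumes l: "l \<in> \<Lambda>"
  shows "continuous_map (subtopology T (branch l \<union> int_TR)) (subtopology T (branch l)) (onto_branch l)"
proof -
  let ?S = "branch l \<union> int_TR"
  let ?X = "subtopology T ?S"
  let ?r = "\<phi> l 0"
  define Ts where "Ts b = (if b then branch l else int_TR \<union> {?r})" for b
  define fs where "fs b = (if b then (\<lambda>x. x) else (\<lambda>x. ?r))" for b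
  have rt: "?r \<in> tsp" using branch_in_top[OF l] by force
  have "continuous_map ?X T (onto_branch l)"
  proof (rule pasting_lemma_closed[where I="{True,False}" and T=Ts and f=fs])
    show "finite {True, False}" by simp
  next
    fix b assume "b \<in> {True, False}"
    show "closedin ?X (Ts b)"
    proof (cases b)
      case True
      then show ?thesis using closedin_subset_topspace[OF closedin_branch[OF l]] by (simp add: Ts_def)
    next
      case False
      have "closedin T (T closure_of int_TR \<union> {?r})"
        by (rule closedin_Un[OF closedin_closure_of closedin_root[OF l]])
      moreover have "(T closure_of int_TR \<union> {?r}) \<inter> ?S = int_TR \<union> {?r}"
      proof
        have "T closure_of int_TR \<subseteq> TRF" using closure_of_minimal[OF int_TR_subset closedin_TR] .
        then show "(T closure_of int_TR \<union> {?r}) \<inter> ?S \<subseteq> int_TR \<union> {?r}" using branch_Int_TR[OF l] by auto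
        show "int_TR \<union> {?r} \<subseteq> (T closure_of int_TR \<union> {?r}) \<inter> ?S"
          using closure_of_subset[OF int_TR_in_top] by auto
      qed
      ultimately have "closedin ?X (int_TR \<union> {?r})" unfolding closedin_subtopology by metis
      then show ?thesis using False by (simp add: Ts_def)
    qed
  next
    fix b assume "b \<in> {True, False}"
    show "continuous_map (subtopology ?X (Ts b)) T (fs b)"
      by (cases b) (auto simp: fs_def rt continuous_map_from_subtopology)
  next
    fix b b' x assume "b \<in> {True, False}" "b' \<in> {True, False}" "x \<in> topspace ?X \<inter> Ts b \<inter> Ts b'"
    then show "fs b x = fs b' x" using branch_Int_int_TR[OF l] by (auto simp: fs_def Ts_def)
  next
    fix x assume "x \<in> topspace ?X"
    then show "\<exists>j. j \<in> {True, False} \<and> x \<in> Ts j \<and> onto_branch l x = fs j x"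
      by (cases "x \<in> branch l") (auto simp: Ts_def fs_def onto_branch_def)
  qed
  moreover have "onto_branch l \<in> topspace ?X \<rightarrow> branch l" by (auto simp: onto_branch_def)
  ultimately show ?thesis by (simp add: continuous_map_in_subtopology)
qed

lemma continuous_phi_inv:
  assumes l: "l \<in> \<Lambda>"
  shows "continuous_map (subtopology T (branch l)) euclideanreal (phi_inv l)"
proof -
  obtain g where g: "homeomorphic_maps (top_of_set {0..1}) (subtopology T (branch l)) (\<phi> l) g"
    using homeomorphic_phi[OF l] homeomorphic_map_maps by blast
  then have gc: "continuous_map (subtopology T (branch l)) (top_of_set {0..1}) g"
    and ginv: "\<And>y. y \<in> topspace (subtopology T (branch l)) \<Longrightarrow> \<phi> l (g y) = y"
    and gr: "\<And>y. y \<in> topspace (subtopology T (branch l)) \<Longrightarrow> g y \<in> {0..1}"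
    by (auto simp: homeomorphic_maps_def continuous_map_def)
  have "\<And>y. y \<in> topspace (subtopology T (branch l)) \<Longrightarrow> g y = phi_inv l y"
  proof -
    fix y assume y: "y \<in> topspace (subtopology T (branch l))"
    then have "\<phi> l (g y) = y" "g y \<in> {0..1}" using ginv gr by auto
    then show "g y = phi_inv l y" unfolding phi_inv_def using inj_on_phi[OF l]
      by (metis inv_into_f_f)
  qed
  then have "continuous_map (subtopology T (branch l)) (top_of_set {0..1}) (phi_inv l)"
    using continuous_map_eq[OF gc] by blast
  then show ?thesis using continuous_map_into_fulltopology by blast
qed

lemma phi_inv_phi: "l \<in> \<Lambda> \<Longrightarrow> d \<in> {0..1} \<Longrightarrow> phi_inv l (\<phi> l d) = d"
  unfolding phi_inv_def using inj_on_phi by (simp add: inv_into_f_f)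

lemma phi_phi_inv: "y \<in> branch l \<Longrightarrow> \<phi> l (phi_inv l y) = y \<and> phi_inv l y \<in> {0..1}"
  unfolding phi_inv_def using inv_into_into[of y "\<phi> l" "{0..1}"] f_inv_into_f[of y "\<phi> l" "{0..1}"]
  by blast

lemma continuous_FX_param:
  assumes A: "A \<in> P"
  shows "continuous_map (top_of_set {lo A..hi A}) T (FX_param A)"
proof -
  have "continuous_map (top_of_set {lo A..hi A}) T (\<phi> (branch_of A))"
  proof -
    have "{lo A..hi A} \<subseteq> {0..1}" using lo_hi[OF A] by auto
    then have "continuous_map (subtopology (top_of_set {0..1}) {lo A..hi A}) T (\<phi> (branch_of A))"
      using continuous_map_from_subtopology[OF continuous_phi[OF branch_of_in_Lambda[OF A]]] by blast
    moreover have "max 0 (lo A) = lo A" "min 1 (hi A) = hi A" using lo_hi[OF A] by auto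
    ultimately show ?thesis by (simp add: subtopology_subtopology Int_absorb1)
  qed
  then have "continuous_map (top_of_set {lo A..hi A}) T (FX A \<circ> \<phi> (branch_of A))"
    using continuous_map_compose continuous_FX by blast
  moreover have "FX A \<circ> \<phi> (branch_of A) = FX_param A" by (rule ext) (simp add: FX_param_def)
  ultimately show ?thesis by simp
qed

lemma FX_param_image: "A \<in> P \<Longrightarrow> t \<in> {lo A..hi A} \<Longrightarrow> FX_param A t \<in> branch (lab A) \<union> int_TR"
  using FX_image P_eq_segment by (metis FX_param_def image_eqI)

lemma continuous_FX_coord:
  assumes A: "A \<in> P"
  shows "continuous_on {lo A..hi A} (FX_coord A)"
proof -
  let ?l = "lab A"
  have l: "?l \<in> \<Lambda>" using lab_in_Lambda[OF A] .
  have "continuous_map (top_of_set {lo A..hi A}) (subtopology T (branch ?l \<union> int_TR)) (FX_param A)"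
    using continuous_FX_param[OF A] FX_param_image[OF A] by (auto simp: continuous_map_in_subtopology)
  then have "continuous_map (top_of_set {lo A..hi A}) (subtopology T (branch ?l)) (onto_branch ?l \<circ> FX_param A)"
    using continuous_map_compose continuous_onto_branch[OF l] by blast
  then have "continuous_map (top_of_set {lo A..hi A}) euclideanreal (phi_inv ?l \<circ> (onto_branch ?l \<circ> FX_param A))"
    using continuous_map_compose continuous_phi_inv[OF l] by blast
  moreover have "phi_inv ?l \<circ> (onto_branch ?l \<circ> FX_param A) = FX_coord A" by (rule ext) (simp add: FX_coord_def)
  ultimately show ?thesis by (simp add: continuous_map_iff_continuous)
qed

lemma branch_coordinate_FX:
  assumes A: "A \<in> P"
  shows "branch_coordinate (lo A) (hi A) (FX_coord A) (FX_param A) (\<phi> (lab A)) (branch (lab A))"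
proof
  let ?l = "lab A"
  have l: "?l \<in> \<Lambda>" using lab_in_Lambda[OF A] .
  show "lo A \<le> hi A" using lo_hi[OF A] by simp
  show "continuous_on {lo A..hi A} (FX_coord A)" by (rule continuous_FX_coord[OF A])
  fix t assume t: "t \<in> {lo A..hi A}"
  have "onto_branch ?l (FX_param A t) \<in> branch ?l" by (auto simp: onto_branch_def)
  then show "0 \<le> FX_coord A t \<and> FX_coord A t \<le> 1" using phi_phi_inv by (simp add: FX_coord_def)
  show "FX_param A t \<in> branch ?l \<Longrightarrow> FX_param A t = \<phi> ?l (FX_coord A t)"
    using phi_phi_inv by (simp add: FX_coord_def onto_branch_def)
  show "FX_param A t \<notin> branch ?l \<Longrightarrow> FX_coord A t = 0"
    using phi_inv_phi[OF l, of 0] by (simp add: FX_coord_def onto_branch_def)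
next
  let ?l = "lab A"
  have l: "?l \<in> \<Lambda>" using lab_in_Lambda[OF A] .
  have "closedin (top_of_set {lo A..hi A}) {t \<in> topspace (top_of_set {lo A..hi A}). FX_param A t \<in> branch ?l}"
    using closedin_continuous_map_preimage[OF continuous_FX_param[OF A] closedin_branch[OF l]] .
  then have "closedin (top_of_set {lo A..hi A}) {t \<in> {lo A..hi A}. FX_param A t \<in> branch ?l}" by simp
  then show "closed {t \<in> {lo A..hi A}. FX_param A t \<in> branch ?l}"
    using closedin_closed_trans by blast
next
  fix d :: real assume "d \<in> {0..1}" then show "\<phi> (lab A) d \<in> branch (lab A)" by simp
next
  show "inj_on (\<phi> (lab A)) {0..1}" using inj_on_phi lab_in_Lambda[OF A] by blast
qed

lemma FX_segment_image: "A \<in> P \<Longrightarrow> FX A ` \<phi> (branch_of A) ` S = FX_param A ` S"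
  by (auto simp: FX_param_def image_image)

lemma FX_param_lo: assumes A: "A \<in> P" shows "FX_param A (lo A) = \<phi> (lab A) 0"
  using FX_lo[OF A] by (simp add: FX_param_def)

lemma FX_initial_segment:
  assumes A: "A \<in> P" and e: "lo A \<le> e" "e \<le> hi A"
  shows "\<exists>M. 0 \<le> M \<and> M \<le> 1 \<and> FX A ` \<phi> (branch_of A) ` {lo A..e} \<inter> branch (lab A) = \<phi> (lab A) ` {0..M}"
proof -
  interpret C: branch_coordinate "lo A" "hi A" "FX_coord A" "FX_param A" "\<phi> (lab A)" "branch (lab A)"
    by (rule branch_coordinate_FX[OF A])
  obtain M where "M \<in> {0..1}" "FX_param A ` {lo A..e} \<inter> branch (lab A) = \<phi> (lab A) ` {0..M}"
    using C.image_Int_branch[of "lo A" e "lo A"] e FX_param_lo[OF A] lo_hi[OF A] by auto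
  then show ?thesis using FX_segment_image[OF A] by auto
qed

lemma phi_image_Int:
  assumes l: "l \<in> \<Lambda>" and "S \<subseteq> {0..1}" "S' \<subseteq> {0..1}"
  shows "\<phi> l ` S \<inter> \<phi> l ` S' = \<phi> l ` (S \<inter> S')"
  using inj_on_image_Int[OF inj_on_phi[OF l] assms(2,3)] by simp

lemma P_Int_initial_segment:
  assumes B: "B \<in> P" and M: "0 \<le> M" "M \<le> 1"
  shows "B \<inter> \<phi> (branch_of B) ` {0..M} = (if lo B \<le> M then \<phi> (branch_of B) ` {lo B..min (hi B) M} else {})"
proof -
  have lh: "0 \<le> lo B" "lo B \<le> hi B" "hi B \<le> 1" using lo_hi[OF B] by auto
  have "B \<inter> \<phi> (branch_of B) ` {0..M} = \<phi> (branch_of B) ` ({lo B..hi B} \<inter> {0..M})"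
    using phi_image_Int[OF branch_of_in_Lambda[OF B]] P_eq_segment[OF B] lh M by (metis atLeastatMost_subset_iff order_refl)
  also have "{lo B..hi B} \<inter> {0..M} = (if lo B \<le> M then {lo B..min (hi B) M} else {})"
    using lh by auto
  finally show ?thesis by simp
qed

lemma branch_of_FX_target:
  assumes A: "A \<in> P" and B: "B \<in> P" and ne: "B \<inter> FX A ` C \<noteq> {}" and C: "C \<subseteq> A"
  shows "branch_of B = lab A"
proof (rule ccontr)
  assume ne2: "branch_of B \<noteq> lab A"
  obtain y where y: "y \<in> B" "y \<in> FX A ` C" using ne by blast
  then obtain z where "z \<in> C" "y = FX A z" by blast
  then have "y \<in> branch (lab A) \<union> int_TR" using FX_image[OF A] C by blast
  moreover have "y \<notin> int_TR" using y P_subset_X[OF B] X_not_int_TR by blast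
  moreover have "y \<in> branch (branch_of B)" using y P_subset_branch[OF B] by blast
  ultimately show False using branches_disjoint[OF branch_of_in_Lambda[OF B] lab_in_Lambda[OF A] ne2] by blast
qed

lemma snoc_initial_segment:
  assumes A: "A \<in> P" and B: "B \<in> P" and e: "lo A \<le> e" "e \<le> hi A"
    and ne: "B \<inter> FX A ` \<phi> (branch_of A) ` {lo A..e} \<noteq> {}"
  shows "\<exists>e'. lo B \<le> e' \<and> e' \<le> hi B \<and> B \<inter> FX A ` \<phi> (branch_of A) ` {lo A..e} = \<phi> (branch_of B) ` {lo B..e'}"
proof -
  have CA: "\<phi> (branch_of A) ` {lo A..e} \<subseteq> A" using P_eq_segment[OF A] e by auto
  have bB: "branch_of B = lab A" using branch_of_FX_target[OF A B ne CA] .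
  obtain M where M: "0 \<le> M" "M \<le> 1" "FX A ` \<phi> (branch_of A) ` {lo A..e} \<inter> branch (lab A) = \<phi> (lab A) ` {0..M}"
    using FX_initial_segment[OF A e] by blast
  have "B \<inter> FX A ` \<phi> (branch_of A) ` {lo A..e} = B \<inter> (FX A ` \<phi> (branch_of A) ` {lo A..e} \<inter> branch (lab A))"
  proof -
    have "B \<subseteq> branch (lab A)" using P_subset_branch[OF B] bB by simp
    then show ?thesis by blast
  qed
  also have "\<dots> = B \<inter> \<phi> (branch_of B) ` {0..M}" using M bB by simp
  also have "\<dots> = (if lo B \<le> M then \<phi> (branch_of B) ` {lo B..min (hi B) M} else {})"
    using P_Int_initial_segment[OF B M(1,2)] .
  finally have eq: "B \<inter> FX A ` \<phi> (branch_of A) ` {lo A..e} = (if lo B \<le> M then \<phi> (branch_of B) ` {lo B..min (hi B) M} else {})" .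
  then have "lo B \<le> M" using ne by (auto split: if_splits)
  then show ?thesis using eq lo_hi[OF B] by (intro exI[of _ "min (hi B) M"]) auto
qed

lemma cyl_initial_segment:
  assumes w: "w \<in> words P" and ne: "cylinder w \<noteq> {}"
  shows "\<exists>e. lo (last w) \<le> e \<and> e \<le> hi (last w) \<and> cylinder w = \<phi> (branch_of (last w)) ` {lo (last w)..e}"
proof -
  have "set w \<subseteq> P" "w \<noteq> []" using w by (auto simp: words_def)
  then show ?thesis using ne
  proof (induction w rule: rev_induct)
    case Nil then show ?case by simp
  next
    case (snoc B u)
    have B: "B \<in> P" using snoc by simp
    show ?case
    proof (cases "u = []")
      case True
      then show ?thesis using cyl_singleton[OF B] P_eq_segment[OF B] lo_hi[OF B] by (intro exI[of _ "hi B"]) auto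
    next
      case False
      then have u: "u \<in> words P" using snoc by (auto simp: words_def)
      have A: "last u \<in> P" using u by (auto simp: words_def dest: last_in_set)
      have eq: "cylinder (u @ [B]) = B \<inter> FX (last u) ` cylinder u" using cyl_snoc[OF u B] .
      then have "cylinder u \<noteq> {}" using snoc.prems by auto
      then obtain e where e: "lo (last u) \<le> e" "e \<le> hi (last u)" "cylinder u = \<phi> (branch_of (last u)) ` {lo (last u)..e}"
        using snoc.IH snoc.prems False by auto
      have "B \<inter> FX (last u) ` \<phi> (branch_of (last u)) ` {lo (last u)..e} \<noteq> {}" using eq e snoc.prems by simp
      then obtain e' where "lo B \<le> e'" "e' \<le> hi B" "B \<inter> FX (last u) ` \<phi> (branch_of (last u)) ` {lo (last u)..e} = \<phi> (branch_of B) ` {lo B..e'}"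
        using snoc_initial_segment[OF A B e(1,2)] by blast
      then show ?thesis using eq e by (intro exI[of _ e']) auto
    qed
  qed
qed

lemma vertex_initial_segment:
  assumes "\<alpha> \<in> vertices T h \<tau> F P"
  shows "velem \<alpha> \<in> P \<and> (\<exists>e. lo (velem \<alpha>) \<le> e \<and> e \<le> hi (velem \<alpha>) \<and> vcylinder \<alpha> = \<phi> (branch_of (velem \<alpha>)) ` {lo (velem \<alpha>)..e})"
proof -
  obtain w where w: "w \<in> words P" "cylinder w \<noteq> {}" "\<alpha> = vclass w" using vertex_vclass[OF assms] by blast
  have "velem \<alpha> = last w" using velem_vclass[OF w(1,2)] w(3) by simp
  moreover have "vcylinder \<alpha> = cylinder w" using vcyl_vclass[OF w(1)] w(3) by simp
  moreover have "last w \<in> P" using w by (auto simp: words_def dest: last_in_set)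
  ultimately show ?thesis using cyl_initial_segment[OF w(1,2)] by simp
qed

section \<open>Covering chains and periodic points\<close>

primrec FX_chain :: "(nat \<Rightarrow> 'a set) \<Rightarrow> nat \<Rightarrow> 'a \<Rightarrow> 'a" where
  "FX_chain E 0 x = x"
| "FX_chain E (Suc j) x = FX (E j) (FX_chain E j x)"

lemma FX_chain_in_top: "x \<in> tsp \<Longrightarrow> FX_chain E j x \<in> tsp"
  by (induction j) (auto simp: FX_in_top)

lemma FX_chain_Fpow: "x \<in> tsp \<Longrightarrow> FX_chain E j x = sh (- (\<Sum>k<j. p (E k))) ((F ^^ j) x)"
proof (induction j)
  case 0 then show ?case by simp
next
  case (Suc j)
  have "FX_chain E (Suc j) x = sh (- p (E j)) (F (sh (- (\<Sum>k<j. p (E k))) ((F ^^ j) x)))"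
    using Suc by (simp add: FX_def)
  also have "\<dots> = sh (- p (E j)) (sh (- (\<Sum>k<j. p (E k))) ((F ^^ Suc j) x))"
    using Suc.prems Fpow_in_top by (simp add: F_sh_commute)
  also have "\<dots> = sh (- (\<Sum>k<Suc j. p (E k))) ((F ^^ Suc j) x)"
  proof -
    have "(F ^^ Suc j) x \<in> tsp" using Suc.prems Fpow_in_top by blast
    then have "sh (- p (E j)) (sh (- (\<Sum>k<j. p (E k))) ((F ^^ Suc j) x)) = sh (- p (E j) + - (\<Sum>k<j. p (E k))) ((F ^^ Suc j) x)"
      using sh_add by blast
    moreover have "sh (- (\<Sum>k<Suc j. p (E k))) ((F ^^ Suc j) x) = sh (- p (E j) + - (\<Sum>k<j. p (E k))) ((F ^^ Suc j) x)"
      by (simp add: algebra_simps)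
    ultimately show ?thesis by simp
  qed
  finally show ?case .
qed

lemma continuous_FX_chain: "continuous_map T T (FX_chain E j)"
proof (induction j)
  case 0
  have "FX_chain E 0 = id" by (rule ext) simp
  then show ?case by simp
next
  case (Suc j)
  have eq: "FX_chain E (Suc j) = FX (E j) \<circ> FX_chain E j" by (rule ext) simp
  have "continuous_map T T (FX (E j) \<circ> FX_chain E j)" by (rule continuous_map_compose[OF Suc continuous_FX])
  then show ?case unfolding eq .
qed

lemma FX_cover_step:
  assumes A: "A \<in> P" and ab: "lo A \<le> a" "a \<le> b" "b \<le> hi A"
    and st: "0 \<le> s'" "s' \<le> t'" "t' \<le> 1"
    and sub: "\<phi> l ` {s'..t'} \<subseteq> FX A ` \<phi> (branch_of A) ` {a..b}" and l: "l = lab A"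
  shows "\<exists>s t. a \<le> s \<and> s \<le> t \<and> t \<le> b \<and> FX A ` \<phi> (branch_of A) ` {s..t} = \<phi> l ` {s'..t'}"
proof -
  interpret C: branch_coordinate "lo A" "hi A" "FX_coord A" "FX_param A" "\<phi> (lab A)" "branch (lab A)" by (rule branch_coordinate_FX[OF A])
  have "\<phi> l s' \<in> FX_param A ` {a..b}" "\<phi> l t' \<in> FX_param A ` {a..b}"
    using sub st FX_segment_image[OF A] by auto
  then obtain t1 t2 where t1: "t1 \<in> {a..b}" "FX_param A t1 = \<phi> l s'" and t2: "t2 \<in> {a..b}" "FX_param A t2 = \<phi> l t'"
    by (metis imageE)
  obtain s1 s2 where s: "min t1 t2 \<le> s1" "s1 \<le> s2" "s2 \<le> max t1 t2" "FX_param A ` {s1..s2} = \<phi> (lab A) ` {s'..t'}"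
    using C.cover_between[of t1 t2 s' t'] t1 t2 st ab l by auto
  then show ?thesis using t1 t2 FX_segment_image[OF A] l by (intro exI[of _ s1] exI[of _ s2]) auto
qed

abbreviation piece :: "'a set \<Rightarrow> real \<Rightarrow> real \<Rightarrow> 'a set" where
  "piece A s t \<equiv> \<phi> (branch_of A) ` {s..t}"

lemma piece_subset_P:
  assumes "A \<in> P" "lo A \<le> s" "t \<le> hi A"
  shows "piece A s t \<subseteq> A"
proof -
  have "{s..t} \<subseteq> {lo A..hi A}" using assms by auto
  then show ?thesis using P_eq_segment[OF assms(1)] by (metis image_mono)
qed

lemma continuous_on_phi_inv_comp:
  assumes i: "i \<in> \<Lambda>" and l: "l \<in> \<Lambda>" and st: "0 \<le> s" "t \<le> 1"
    and g: "continuous_map T T g" and img: "g ` \<phi> i ` {s..t} \<subseteq> branch l"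
  shows "continuous_on {s..t} (\<lambda>u. phi_inv l (g (\<phi> i u)))"
proof -
  have "continuous_map (subtopology (top_of_set {0..1}) {s..t}) T (\<phi> i)"
    using continuous_map_from_subtopology[OF continuous_phi[OF i]] .
  moreover have "max 0 s = s" "min 1 t = t" using st by auto
  ultimately have "continuous_map (top_of_set {s..t}) T (\<phi> i)"
    by (simp add: subtopology_subtopology)
  then have "continuous_map (top_of_set {s..t}) (subtopology T (branch l)) (g \<circ> \<phi> i)"
    using continuous_map_compose[OF _ g] img by (auto simp: continuous_map_in_subtopology)
  then have "continuous_map (top_of_set {s..t}) euclideanreal (phi_inv l \<circ> (g \<circ> \<phi> i))"
    using continuous_map_compose continuous_phi_inv[OF l] by blast
  then show ?thesis by (simp add: continuous_map_iff_continuous comp_def)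
qed

lemma chain_pullback:
  assumes EP: "\<And>j. j \<le> q \<Longrightarrow> E j \<in> P"
    and ab: "\<And>j. j \<le> q \<Longrightarrow> lo (E j) \<le> a j \<and> a j \<le> b j \<and> b j \<le> hi (E j)"
    and cov: "\<And>j. j < q \<Longrightarrow> piece (E (Suc j)) (a (Suc j)) (b (Suc j)) \<subseteq> FX (E j) ` piece (E j) (a j) (b j)"
    and cd: "a q \<le> c" "c \<le> d" "d \<le> b q"
  shows "\<exists>s t. a 0 \<le> s \<and> s \<le> t \<and> t \<le> b 0 \<and> FX_chain E q ` piece (E 0) s t = piece (E q) c d \<and>
           (\<forall>j\<le>q. FX_chain E j ` piece (E 0) s t \<subseteq> piece (E j) (a j) (b j))"
  using EP ab cov cd
proof (induction q arbitrary: c d)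
  case 0
  have "FX_chain E 0 = id" by (rule ext) simp
  then show ?case using 0 by (intro exI[of _ c] exI[of _ d]) auto
next
  case (Suc q)
  have EPq: "E q \<in> P" "E (Suc q) \<in> P" using Suc.prems(1) by auto
  have abq: "lo (E q) \<le> a q" "a q \<le> b q" "b q \<le> hi (E q)" using Suc.prems(2)[of q] by auto
  have cdS: "lo (E (Suc q)) \<le> c" "d \<le> hi (E (Suc q))" using Suc.prems(2)[of "Suc q"] Suc.prems(4-6) by auto
  have "piece (E (Suc q)) c d \<subseteq> piece (E (Suc q)) (a (Suc q)) (b (Suc q))"
    using Suc.prems(4,6) by auto
  then have sub: "piece (E (Suc q)) c d \<subseteq> FX (E q) ` piece (E q) (a q) (b q)"
    using Suc.prems(3)[of q] by blast
  have "branch_of (E (Suc q)) = lab (E q)"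
  proof (rule branch_of_FX_target[OF EPq])
    have "\<phi> (branch_of (E (Suc q))) c \<in> piece (E (Suc q)) c d" using Suc.prems(5) by auto
    then show "E (Suc q) \<inter> FX (E q) ` piece (E q) (a q) (b q) \<noteq> {}"
      using sub piece_subset_P[OF EPq(2) cdS] by blast
    show "piece (E q) (a q) (b q) \<subseteq> E q" using piece_subset_P[OF EPq(1)] abq by auto
  qed
  moreover have "0 \<le> c" "d \<le> 1" using cdS lo_hi[OF EPq(2)] by auto
  ultimately obtain s' t' where st': "a q \<le> s'" "s' \<le> t'" "t' \<le> b q"
    and img: "FX (E q) ` piece (E q) s' t' = piece (E (Suc q)) c d"
    using FX_cover_step[OF EPq(1) abq, of c d "branch_of (E (Suc q))"] sub Suc.prems(5) by auto
  obtain s t where st: "a 0 \<le> s" "s \<le> t" "t \<le> b 0" "FX_chain E q ` piece (E 0) s t = piece (E q) s' t'"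
    and inside: "\<forall>j\<le>q. FX_chain E j ` piece (E 0) s t \<subseteq> piece (E j) (a j) (b j)"
    using Suc.IH[of s' t'] Suc.prems(1-3) st' by auto
  have "FX_chain E (Suc q) ` piece (E 0) s t = FX (E q) ` FX_chain E q ` piece (E 0) s t"
    by (auto simp: image_image)
  then have "FX_chain E (Suc q) ` piece (E 0) s t = piece (E (Suc q)) c d" using st(4) img by simp
  moreover have "piece (E (Suc q)) c d \<subseteq> piece (E (Suc q)) (a (Suc q)) (b (Suc q))"
    using Suc.prems(4,6) by auto
  ultimately show ?case using st inside by (intro exI[of _ s] exI[of _ t]) (auto simp: le_Suc_eq)
qed

lemma chain_fixed_point:
  assumes EP: "\<And>j. j \<le> q \<Longrightarrow> E j \<in> P"
    and ab: "\<And>j. j \<le> q \<Longrightarrow> lo (E j) \<le> a j \<and> a j \<le> b j \<and> b j \<le> hi (E j)"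
    and cov: "\<And>j. j < q \<Longrightarrow> piece (E (Suc j)) (a (Suc j)) (b (Suc j)) \<subseteq> FX (E j) ` piece (E j) (a j) (b j)"
    and closing: "E q = E 0" "a q \<le> a 0" "b 0 \<le> b q"
  shows "\<exists>x. (\<forall>j\<le>q. FX_chain E j x \<in> piece (E j) (a j) (b j)) \<and> FX_chain E q x = x"
proof -
  obtain s t where st: "a 0 \<le> s" "s \<le> t" "t \<le> b 0"
    and onto: "FX_chain E q ` piece (E 0) s t = piece (E 0) (a 0) (b 0)"
    and inside: "\<forall>j\<le>q. FX_chain E j ` piece (E 0) s t \<subseteq> piece (E j) (a j) (b j)"
    using chain_pullback[of q E a b "a 0" "b 0", OF EP ab cov] closing ab[of 0] by auto
  let ?i = "branch_of (E 0)"
  have i: "?i \<in> \<Lambda>" using branch_of_in_Lambda EP[of 0] by simp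
  have ab0: "0 \<le> a 0" "b 0 \<le> 1" using ab[of 0] lo_hi[OF EP[of 0]] by auto
  define f where "f u = phi_inv ?i (FX_chain E q (\<phi> ?i u))" for u
  have "FX_chain E q ` \<phi> ?i ` {s..t} \<subseteq> branch ?i" using onto ab0 by auto
  then have "continuous_on {s..t} f"
    unfolding f_def using ab0 st by (intro continuous_on_phi_inv_comp[OF i i] continuous_FX_chain) auto
  moreover have "f ` {s..t} = {a 0..b 0}"
  proof -
    have "f ` {s..t} = phi_inv ?i ` FX_chain E q ` piece (E 0) s t" by (simp add: f_def image_image)
    also have "\<dots> = phi_inv ?i ` piece (E 0) (a 0) (b 0)" by (simp only: onto)
    also have "\<dots> = (\<lambda>u. phi_inv ?i (\<phi> ?i u)) ` {a 0..b 0}" by (simp add: image_image)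
    also have "\<dots> = (\<lambda>u. u) ` {a 0..b 0}" by (rule image_cong) (use phi_inv_phi[OF i] ab0 in auto)
    finally show ?thesis by simp
  qed
  ultimately obtain u where u: "u \<in> {s..t}" "f u = u"
    using continuous_on_interval_fixed_point[of s t f] st by auto
  let ?x = "\<phi> ?i u"
  have x: "?x \<in> piece (E 0) s t" using u(1) by simp
  have "FX_chain E q ?x \<in> branch ?i"
    using imageI[OF x, of "FX_chain E q"] unfolding onto using ab0 by auto
  then have "FX_chain E q ?x = \<phi> ?i (phi_inv ?i (FX_chain E q ?x))" using phi_phi_inv by metis
  also have "\<dots> = ?x" using u(2) by (simp add: f_def)
  finally have fixed: "FX_chain E q ?x = ?x" .
  have "FX_chain E j ?x \<in> piece (E j) (a j) (b j)" if "j \<le> q" for j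
    using imageI[OF x, of "FX_chain E j"] inside that by blast
  then show ?thesis using fixed by blast
qed

lemma Fpow_FX_chain_fixed_point:
  assumes q: "1 \<le> q" and x: "x \<in> tsp" and fx: "FX_chain E q x = x"
  defines "W \<equiv> \<Sum>k<q. p (E k)"
  shows "(F ^^ q) x = sh W x"
    and "(F ^^ n) x = sh (int (n div q) * W + (\<Sum>k<n mod q. p (E k))) (FX_chain E (n mod q) x)"
proof -
  have chain: "(F ^^ j) x = sh (\<Sum>k<j. p (E k)) (FX_chain E j x)" for j
    using FX_chain_Fpow[OF x] Fpow_in_top[OF x] sh_add by simp
  show Fq: "(F ^^ q) x = sh W x" using chain[of q] fx by (simp add: W_def)
  have Fkq: "(F ^^ (k * q)) x = sh (int k * W) x" for k
  proof (induction k)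
    case (Suc k)
    have "(F ^^ (Suc k * q)) x = (F ^^ q) ((F ^^ (k * q)) x)" by (simp add: funpow_add)
    also have "\<dots> = sh (int k * W) ((F ^^ q) x)" using Suc Fpow_sh_commute x by simp
    also have "\<dots> = sh (int (Suc k) * W) x" using Fq sh_add x by (simp add: algebra_simps)
    finally show ?case .
  qed simp
  have "(F ^^ n) x = (F ^^ (n mod q)) ((F ^^ ((n div q) * q)) x)"
    by (metis comp_apply funpow_add mod_div_mult_eq)
  also have "\<dots> = sh (int (n div q) * W) ((F ^^ (n mod q)) x)" using Fkq Fpow_sh_commute x by simp
  also have "\<dots> = sh (int (n div q) * W + (\<Sum>k<n mod q. p (E k))) (FX_chain E (n mod q) x)"
    using chain[of "n mod q"] sh_add FX_chain_in_top x by simp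
  finally show "(F ^^ n) x = sh (int (n div q) * W + (\<Sum>k<n mod q. p (E k))) (FX_chain E (n mod q) x)" .
qed

lemma periodic_point_of_FX_chain:
  assumes q: "1 \<le> q" and GX: "\<And>j. j \<le> q \<Longrightarrow> FX_chain E j x \<in> X" and fx: "FX_chain E q x = x"
  shows "x \<in> XI \<and> periodic_mod1 T \<tau> F x \<and> has_rot T h F x (real_of_int (\<Sum>k<q. p (E k)) / real q)"
proof -
  define W where "W = (\<Sum>k<q. p (E k))"
  have xX: "x \<in> X" using GX[of q] fx by simp
  then have xt: "x \<in> tsp" using X_in_top by blast
  note orbit = Fpow_FX_chain_fixed_point[OF q xt fx, folded W_def]
  have "FX_chain E (n mod q) x \<in> X" for n using GX q by simp
  then have XI: "x \<in> XI" unfolding Xinf_def zsh_set_def using xX orbit(2) by blast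
  have per: "periodic_mod1 T \<tau> F x" unfolding periodic_mod1_def using q orbit(1) by blast
  define c where "c n = retr ((F ^^ n) x) - retr x - real n * (real_of_int W / real q)" for n
  have "c (n + q) = c n" for n
  proof -
    have "(F ^^ (n + q)) x = sh W ((F ^^ n) x)" using orbit(1) Fpow_sh_commute xt by (simp add: funpow_add)
    then have "retr ((F ^^ (n + q)) x) = retr ((F ^^ n) x) + real_of_int W" using retr_sh Fpow_in_top xt by simp
    then show "c (n + q) = c n" using q by (simp add: c_def field_simps)
  qed
  then obtain B where "\<And>n. \<bar>c n\<bar> \<le> B" using bounded_if_eventually_periodic[OF q, of 0 c] by blast
  then have "(\<lambda>n. (retr ((F ^^ n) x) - retr x) / real n) \<longlonglongrightarrow> real_of_int W / real q"
    using average_tendsto_of_bounded_deviation[of "\<lambda>n. retr ((F ^^ n) x) - retr x" "real_of_int W / real q" B]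
    by (simp add: c_def)
  then show ?thesis using XI per by (simp add: has_rot_def W_def)
qed

definition vend :: "'a set list set \<Rightarrow> real" where
  "vend \<alpha> = (SOME e. lo (velem \<alpha>) \<le> e \<and> e \<le> hi (velem \<alpha>) \<and> vcylinder \<alpha> = \<phi> (branch_of (velem \<alpha>)) ` {lo (velem \<alpha>)..e})"

lemma vertex_vend:
  assumes "\<alpha> \<in> vertices T h \<tau> F P"
  shows "velem \<alpha> \<in> P \<and> lo (velem \<alpha>) \<le> vend \<alpha> \<and> vend \<alpha> \<le> hi (velem \<alpha>) \<and> vcylinder \<alpha> = \<phi> (branch_of (velem \<alpha>)) ` {lo (velem \<alpha>)..vend \<alpha>}"
proof -
  have "velem \<alpha> \<in> P" and ex: "\<exists>e. lo (velem \<alpha>) \<le> e \<and> e \<le> hi (velem \<alpha>) \<and> vcylinder \<alpha> = \<phi> (branch_of (velem \<alpha>)) ` {lo (velem \<alpha>)..e}"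
    using vertex_initial_segment[OF assms] by auto
  then show ?thesis using someI_ex[OF ex] unfolding vend_def by blast
qed

lemma chain_periodic_point:
  assumes q: "1 \<le> q" and EP: "\<And>j. j \<le> q \<Longrightarrow> E j \<in> P"
    and ab: "\<And>j. j \<le> q \<Longrightarrow> lo (E j) \<le> a j \<and> a j \<le> b j \<and> b j \<le> hi (E j)"
    and cov: "\<And>j. j < q \<Longrightarrow> piece (E (Suc j)) (a (Suc j)) (b (Suc j)) \<subseteq> FX (E j) ` piece (E j) (a j) (b j)"
    and closing: "E q = E 0" "a q \<le> a 0" "b 0 \<le> b q"
  shows "\<exists>x\<in>XI. periodic_mod1 T \<tau> F x \<and> has_rot T h F x (real_of_int (\<Sum>k<q. p (E k)) / real q)"
proof -
  obtain x where x: "\<And>j. j \<le> q \<Longrightarrow> FX_chain E j x \<in> piece (E j) (a j) (b j)" "FX_chain E q x = x"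
    using chain_fixed_point[of q E a b, OF EP ab cov closing] by blast
  have "piece (E j) (a j) (b j) \<subseteq> X" if "j \<le> q" for j
    using piece_subset_P[OF EP[OF that]] ab[OF that] P_subset_X[OF EP[OF that]] by force
  then have inX: "FX_chain E j x \<in> X" if "j \<le> q" for j using x(1) that by blast
  then show ?thesis using periodic_point_of_FX_chain[OF q _ x(2)] by blast
qed

lemma FX_cover_Inf:
  assumes A: "A \<in> P" and e: "\<And>k. lo A \<le> e k \<and> e k \<le> hi A"
    and y: "y \<in> X" "\<And>k. y \<in> FX A ` piece A (lo A) (e k)"
  shows "y \<in> FX A ` piece A (lo A) (Inf (range e))"
proof -
  interpret C: branch_coordinate "lo A" "hi A" "FX_coord A" "FX_param A" "\<phi> (lab A)" "branch (lab A)"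
    by (rule branch_coordinate_FX[OF A])
  define Z where "Z = {t \<in> {lo A..hi A}. FX_param A t = y}"
  have preimage: "\<exists>t\<in>Z. t \<le> e k" for k
    using y(2)[of k] e[of k] unfolding FX_segment_image[OF A] Z_def by force
  then obtain t0 where t0: "t0 \<in> Z" by blast
  have "y \<in> branch (lab A) \<union> int_TR" using FX_param_image[OF A] t0 by (auto simp: Z_def)
  then obtain d where d: "d \<in> {0..1}" "y = \<phi> (lab A) d" using y(1) X_not_int_TR by blast
  have "closed Z" "Z \<subseteq> {lo A..hi A}"
    unfolding Z_def d(2) using C.closed_preimage_psi[of "lo A" "hi A" d] d(1) by auto
  then obtain ts where ts: "ts \<in> Z" "\<And>t. t \<in> Z \<Longrightarrow> ts \<le> t"
    using closed_subset_interval_attains_min_max(1)[OF _ _ t0] by blast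
  have "ts \<le> Inf (range e)"
    using preimage ts(2) by (intro cInf_greatest) (auto intro: order_trans)
  then have "ts \<in> {lo A..Inf (range e)}" using ts(1) by (simp add: Z_def)
  then show ?thesis using ts(1) unfolding FX_segment_image[OF A] Z_def by blast
qed

text \<open>After a period the right ends \<open>vend\<close> of the cylinders need not return to their
  initial values; their infima over all periods give a chain of intervals that closes up.\<close>
lemma Inf_vend_chain:
  assumes path: "inf_path T h \<tau> F P \<alpha>" and E: "\<And>j k. velem (\<alpha> (N + j + k * q)) = E j"
  defines "b \<equiv> \<lambda>j. Inf (range (\<lambda>k. vend (\<alpha> (N + j + k * q))))"
  shows "E j \<in> P \<and> lo (E j) \<le> b j \<and> b j \<le> hi (E j)"
    and "piece (E (Suc j)) (lo (E (Suc j))) (b (Suc j)) \<subseteq> FX (E j) ` piece (E j) (lo (E j)) (b j)"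
    and "b 0 \<le> b q"
proof -
  have ar: "\<And>n. arrow T h \<tau> F P (\<alpha> n) (\<alpha> (Suc n))" using path by (simp add: inf_path_def)
  have vert: "\<And>n. \<alpha> n \<in> vertices T h \<tau> F P" using ar by (simp add: arrow_def)
  define e where "e j k = vend (\<alpha> (N + j + k * q))" for j k
  have b_e: "b j = Inf (range (e j))" for j by (simp add: b_def e_def)
  have EP: "E j \<in> P" and e_bounds: "lo (E j) \<le> e j k \<and> e j k \<le> hi (E j)"
    and vc: "vcylinder (\<alpha> (N + j + k * q)) = piece (E j) (lo (E j)) (e j k)" for j k
    using vertex_vend[OF vert, of "N + j + k * q"] unfolding E e_def by auto
  have b_le: "b j \<le> e j k" for j k
    unfolding b_e using e_bounds by (intro cInf_lower) (auto simp: bdd_below_def)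
  have b_bounds: "lo (E j) \<le> b j \<and> b j \<le> hi (E j)" for j
    using e_bounds[of j] b_le[of j 0] unfolding b_e by (auto intro: cInf_greatest order_trans)
  then show "E j \<in> P \<and> lo (E j) \<le> b j \<and> b j \<le> hi (E j)" using EP by simp
  show "piece (E (Suc j)) (lo (E (Suc j))) (b (Suc j)) \<subseteq> FX (E j) ` piece (E j) (lo (E j)) (b j)"
  proof
    fix y assume y: "y \<in> piece (E (Suc j)) (lo (E (Suc j))) (b (Suc j))"
    have "y \<in> X" using y piece_subset_P[OF EP] b_bounds P_subset_X[OF EP] by blast
    moreover have "y \<in> FX (E j) ` piece (E j) (lo (E j)) (e j k)" for k
    proof -
      have "y \<in> vcylinder (\<alpha> (Suc (N + j + k * q)))" using y b_le[of "Suc j" k] vc[of "Suc j" k] by auto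
      then have "y \<in> FX (velem (\<alpha> (N + j + k * q))) ` vcylinder (\<alpha> (N + j + k * q))"
        using arrow_vcylinder_subset[OF ar[of "N + j + k * q"]] by blast
      then show ?thesis by (simp only: vc E)
    qed
    ultimately show "y \<in> FX (E j) ` piece (E j) (lo (E j)) (b j)"
      unfolding b_e by (rule FX_cover_Inf[OF EP[of j] e_bounds[of j]])
  qed
  have "e q k = e 0 (Suc k)" for k by (simp add: e_def algebra_simps)
  then show "b 0 \<le> b q" unfolding b_e[of q] using b_le[of 0] by (intro cInf_greatest) auto
qed

lemma eventually_periodic_path_rot:
  assumes path: "inf_path T h \<tau> F P \<alpha>" and q: "1 \<le> q"
    and per: "\<And>n. N \<le> n \<Longrightarrow> velem (\<alpha> (n + q)) = velem (\<alpha> n)"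
  shows "\<exists>r. path_rot T h \<tau> F P p \<alpha> r \<and> r \<in> \<rat> \<and> (\<exists>x\<in>XI. periodic_mod1 T \<tau> F x \<and> has_rot T h F x r)"
proof -
  have per_k: "velem (\<alpha> (n + k * q)) = velem (\<alpha> n)" if "N \<le> n" for n k
  proof (induction k)
    case (Suc k)
    have "velem (\<alpha> (n + Suc k * q)) = velem (\<alpha> (n + k * q + q))" by (simp add: algebra_simps)
    also have "\<dots> = velem (\<alpha> n)" using per[of "n + k * q"] that Suc by simp
    finally show ?case .
  qed simp
  define E where "E j = velem (\<alpha> (N + j))" for j
  have E_k: "velem (\<alpha> (N + j + k * q)) = E j" for j k using per_k by (simp add: E_def)
  define b where "b j = Inf (range (\<lambda>k. vend (\<alpha> (N + j + k * q))))" for j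
  have "E q = E 0" using E_k[of 0 1] by (simp add: E_def)
  then obtain x where x: "x \<in> XI" "periodic_mod1 T \<tau> F x"
    "has_rot T h F x (real_of_int (\<Sum>k<q. p (E k)) / real q)"
    using chain_periodic_point[OF q, of E "\<lambda>j. lo (E j)" b] Inf_vend_chain[OF path E_k]
    unfolding b_def by auto
  have "(\<Sum>k<q. vweight T h \<tau> F P p (\<alpha> (N + k))) = (\<Sum>k<q. p (E k))"
    by (simp add: vweight_velem E_def)
  then have "path_rot T h \<tau> F P p \<alpha> (real_of_int (\<Sum>k<q. p (E k)) / real q)"
    using average_tendsto_eventually_periodic[OF q, of N "\<lambda>n. vweight T h \<tau> F P p (\<alpha> n)"] per
    by (simp add: path_rot_def vweight_velem)
  moreover have "real_of_int (\<Sum>k<q. p (E k)) / real q \<in> \<rat>"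
    by (intro Rats_divide Rats_of_int Rats_of_nat)
  ultimately show ?thesis using x by blast
qed

section \<open>Loops and paths in \<open>J\<close>\<close>

lemma inf_path_loop_rep:
  assumes L: "is_loop T h \<tau> F P \<gamma>"
  shows "inf_path T h \<tau> F P (loop_rep \<gamma>)"
proof -
  define k where "k = length \<gamma> - 1"
  have k: "1 \<le> k" and ar: "\<And>i. i < k \<Longrightarrow> arrow T h \<tau> F P (\<gamma> ! i) (\<gamma> ! Suc i)"
    using L by (auto simp: is_loop_def k_def)
  have "\<gamma> \<noteq> []" "hd \<gamma> = last \<gamma>" using L by (auto simp: is_loop_def)
  then have "\<gamma> ! k = \<gamma> ! 0" by (simp add: hd_conv_nth last_conv_nth k_def)
  moreover have "n mod k < k" for n using k by simp
  ultimately have "arrow T h \<tau> F P (\<gamma> ! (n mod k)) (\<gamma> ! (Suc n mod k))" for n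
    using ar[of "n mod k"] by (auto simp: mod_Suc)
  then show ?thesis by (simp add: inf_path_def loop_rep_def k_def)
qed

lemma loop_rot_periodic_point:
  assumes L: "is_loop T h \<tau> F P \<gamma>"
  shows "\<exists>r. path_rot T h \<tau> F P p (loop_rep \<gamma>) r \<and> r \<in> \<rat> \<and>
           (\<exists>x\<in>XI. periodic_mod1 T \<tau> F x \<and> has_rot T h F x r)"
proof (rule eventually_periodic_path_rot[OF inf_path_loop_rep[OF L], of "length \<gamma> - 1" 0])
  have "2 \<le> length \<gamma>" using L by (simp add: is_loop_def)
  then show "1 \<le> length \<gamma> - 1" by simp
  show "velem (loop_rep \<gamma> (n + (length \<gamma> - 1))) = velem (loop_rep \<gamma> n)" for n
    by (simp add: loop_rep_def)
qed

lemma P_ordered: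
  assumes B: "B \<in> P" and B': "B' \<in> P" and bb: "branch_of B = branch_of B'" and ne: "B \<noteq> B'"
  shows "hi B < lo B' \<or> hi B' < lo B"
proof (rule ccontr)
  assume "\<not> (hi B < lo B' \<or> hi B' < lo B)"
  then have ov: "lo B' \<le> hi B" "lo B \<le> hi B'" by auto
  define t where "t = max (lo B) (lo B')"
  have "t \<in> {lo B..hi B}" "t \<in> {lo B'..hi B'}" using ov lo_hi[OF B] lo_hi[OF B'] by (auto simp: t_def)
  then have "\<phi> (branch_of B) t \<in> B" "\<phi> (branch_of B) t \<in> B'" using P_eq_segment[OF B] P_eq_segment[OF B'] bb by auto
  then show False using P_disjoint[OF B B' ne] by blast
qed

definition first_elem :: "'i \<Rightarrow> 'a set" where
  "first_elem l = (THE B. B \<in> P \<and> branch_of B = l \<and> (\<forall>B'\<in>P. branch_of B' = l \<longrightarrow> lo B \<le> lo B'))"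

lemma first_elem_eq:
  assumes B: "B \<in> P" "branch_of B = l" and minB: "\<And>B'. B' \<in> P \<Longrightarrow> branch_of B' = l \<Longrightarrow> lo B \<le> lo B'"
  shows "first_elem l = B"
  unfolding first_elem_def
proof (rule the_equality)
  show "B \<in> P \<and> branch_of B = l \<and> (\<forall>B'\<in>P. branch_of B' = l \<longrightarrow> lo B \<le> lo B')" using B minB by blast
next
  fix C assume C: "C \<in> P \<and> branch_of C = l \<and> (\<forall>B'\<in>P. branch_of B' = l \<longrightarrow> lo C \<le> lo B')"
  have "lo B \<le> lo C" using minB C by blast
  moreover have "lo C \<le> lo B" using C B by blast
  ultimately have "lo C = lo B" by simp
  show "C = B"
  proof (rule ccontr)
    assume "C \<noteq> B"
    then have "hi C < lo B \<or> hi B < lo C" using P_ordered C B by metis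
    then show False using \<open>lo C = lo B\<close> lo_hi C B(1) by fastforce
  qed
qed

lemma arrow_singleton:
  assumes v: "\<alpha> \<in> vertices T h \<tau> F P" and B: "B \<in> P" and sub: "B \<subseteq> FX (velem \<alpha>) ` vcylinder \<alpha>"
  shows "arrow T h \<tau> F P \<alpha> (vclass [B])"
proof -
  obtain w where w: "w \<in> words P" "cylinder w \<noteq> {}" "\<alpha> = vclass w" using vertex_vclass[OF v] by blast
  have lw: "velem \<alpha> = last w" using velem_vclass[OF w(1,2)] w(3) by simp
  have cw: "vcylinder \<alpha> = cylinder w" using vcyl_vclass[OF w(1)] w(3) by simp
  have wB: "w @ [B] \<in> words P" using w B by (auto simp: words_def)
  have cwB: "cylinder (w @ [B]) = B" using cyl_snoc[OF w(1) B] sub lw cw by auto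
  have Bne: "B \<noteq> {}" using P_eq_segment[OF B] lo_hi[OF B] by auto
  have sB: "[B] \<in> words P" using B by (simp add: words_def)
  have "simrel T h \<tau> F (w @ [B]) [B]"
    unfolding simrel_def using cwB cyl_singleton[OF B] by (intro exI[of _ 0]) auto
  then have "sim (w @ [B]) [B]" unfolding simeq_def using wB sB by blast
  then have e: "vclass (w @ [B]) = vclass [B]" by (rule simeq_vclass_eq)
  have "vclass (w @ [B]) \<in> vertices T h \<tau> F P" using wB cwB Bne unfolding vertices_def by blast
  then show ?thesis unfolding arrow_def using v w wB B e by (metis words_def)
qed

text \<open>If no arrow leads to a singleton vertex, the image of the cylinder meets the target branch
  in an initial segment containing no whole partition element, so it meets only the first one.\<close>
lemma Jpath_next_elem:
  assumes ar: "arrow T h \<tau> F P \<alpha> \<beta>" and noB: "\<not> (\<exists>B\<in>P. arrow T h \<tau> F P \<alpha> (vclass [B]))"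
  shows "velem \<beta> = first_elem (lab (velem \<alpha>))"
proof -
  have v: "\<alpha> \<in> vertices T h \<tau> F P" using ar by (simp add: arrow_def)
  note AP = arrow_props[OF ar]
  let ?A = "velem \<alpha>" and ?E = "velem \<beta>" and ?l = "lab (velem \<alpha>)"
  have A: "?A \<in> P" and E: "?E \<in> P" using AP by auto
  have vp: "lo ?A \<le> vend \<alpha>" "vend \<alpha> \<le> hi ?A" "vcylinder \<alpha> = \<phi> (branch_of ?A) ` {lo ?A..vend \<alpha>}"
    using vertex_vend[OF v] by auto
  obtain M where M: "0 \<le> M" "M \<le> 1" "FX ?A ` vcylinder \<alpha> \<inter> branch ?l = \<phi> ?l ` {0..M}"
    using FX_initial_segment[OF A vp(1,2)] vp(3) by auto
  have hiB: "\<And>B. B \<in> P \<Longrightarrow> branch_of B = ?l \<Longrightarrow> M < hi B"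
  proof (rule ccontr)
    fix B assume B: "B \<in> P" "branch_of B = ?l" and "\<not> M < hi B"
    then have "{lo B..hi B} \<subseteq> {0..M}" using lo_hi[OF B(1)] by auto
    then have "B \<subseteq> \<phi> ?l ` {0..M}" using P_eq_segment[OF B(1)] B(2) by (metis image_mono)
    then have "B \<subseteq> FX ?A ` vcylinder \<alpha>" using M by blast
    then have "arrow T h \<tau> F P \<alpha> (vclass [B])" using arrow_singleton[OF v B(1)] by blast
    then show False using noB B by blast
  qed
  have vcE: "vcylinder \<beta> = ?E \<inter> FX ?A ` vcylinder \<alpha>" "vcylinder \<beta> \<noteq> {}" using AP by auto
  have CA: "vcylinder \<alpha> \<subseteq> ?A" using AP by blast
  have bE: "branch_of ?E = ?l" using branch_of_FX_target[OF A E _ CA] vcE by auto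
  have "?E \<inter> \<phi> ?l ` {0..M} \<noteq> {}"
  proof -
    have "?E \<subseteq> branch ?l" using P_subset_branch[OF E] bE by simp
    then show ?thesis using vcE M by blast
  qed
  then have loE: "lo ?E \<le> M" using P_Int_initial_segment[OF E M(1,2)] bE by (auto split: if_splits)
  have "first_elem ?l = ?E"
  proof (rule first_elem_eq[OF E bE])
    fix B' assume B': "B' \<in> P" "branch_of B' = ?l"
    show "lo ?E \<le> lo B'"
    proof (cases "B' = ?E")
      case True then show ?thesis by simp
    next
      case False
      then have "hi B' < lo ?E \<or> hi ?E < lo B'" using P_ordered[OF B'(1) E] B' bE by metis
      moreover have "M < hi B'" using hiB B' by blast
      ultimately show ?thesis using loE lo_hi[OF E] by linarith
    qed
  qed
  then show ?thesis by simp
qed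

lemma Jpath_velem_eventually_periodic:
  assumes path: "inf_path T h \<tau> F P \<alpha>"
    and N: "\<And>n. N \<le> n \<Longrightarrow> \<not> (\<exists>B\<in>P. arrow T h \<tau> F P (\<alpha> n) (vclass [B]))"
  shows "\<exists>N' q. 1 \<le> q \<and> (\<forall>n\<ge>N'. velem (\<alpha> (n + q)) = velem (\<alpha> n))"
proof -
  have ar: "\<And>n. arrow T h \<tau> F P (\<alpha> n) (\<alpha> (Suc n))" using path by (simp add: inf_path_def)
  show ?thesis
    using eventually_periodic_orbit[OF finite_P, of "\<lambda>n. velem (\<alpha> n)" N "\<lambda>A. first_elem (lab A)"]
      arrow_props[OF ar] Jpath_next_elem[OF ar N] by simp
qed

lemma Jpath_rot_periodic_point:
  assumes J: "\<alpha> \<in> Jpaths T h \<tau> F P"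
  shows "\<exists>r. path_rot T h \<tau> F P p \<alpha> r \<and> r \<in> \<rat> \<and>
           (\<exists>x\<in>XI. periodic_mod1 T \<tau> F x \<and> has_rot T h F x r)"
proof -
  have path: "inf_path T h \<tau> F P \<alpha>" using J by (simp add: Jpaths_def)
  obtain N where "\<And>n. N \<le> n \<Longrightarrow> \<not> (\<exists>B\<in>P. arrow T h \<tau> F P (\<alpha> n) (vclass [B]))"
    using J by (auto simp: Jpaths_def)
  then obtain N' q where "1 \<le> q" "\<And>n. N' \<le> n \<Longrightarrow> velem (\<alpha> (n + q)) = velem (\<alpha> n)"
    using Jpath_velem_eventually_periodic[OF path] by blast
  then show ?thesis using eventually_periodic_path_rot[OF path] by blast
qed

end

theorem mainTheorem3:
  fixes T :: "'a topology" and h :: "real \<Rightarrow> 'a" and \<tau> F :: "'a \<Rightarrow> 'a"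
    and \<Lambda> :: "'i set" and \<phi> :: "'i \<Rightarrow> real \<Rightarrow> 'a"
    and P :: "'a set set" and lab :: "'a set \<Rightarrow> 'i" and p :: "'a set \<Rightarrow> int"
  assumes "lifted_graph T h \<tau>"
    and "continuous_map T T F"
    and "degree_one T \<tau> F"
    and "sun_like T h F \<Lambda> \<phi>"
    and "basic_partition T h \<tau> F \<Lambda> \<phi> P lab p"
  shows "Rot T h F (Xinf T h \<tau> F) = Rot_graph T h \<tau> F P p \<and>
    (\<forall>\<gamma>. is_loop T h \<tau> F P \<gamma> \<longrightarrow>
           (\<exists>r. path_rot T h \<tau> F P p (loop_rep \<gamma>) r \<and> r \<in> \<rat> \<and>
                (\<exists>x\<in>Xinf T h \<tau> F. periodic_mod1 T \<tau> F x \<and> has_rot T h F x r))) \<and>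
    (\<forall>\<alpha>\<in>Jpaths T h \<tau> F P.
           (\<exists>r. path_rot T h \<tau> F P p \<alpha> r \<and> r \<in> \<rat> \<and>
                (\<exists>x\<in>Xinf T h \<tau> F. periodic_mod1 T \<tau> F x \<and> has_rot T h F x r)))"
proof -
  interpret sun_like_partition T h \<tau> F \<Lambda> \<phi> P lab p
    using assms by (rule sun_like_partition.intro)
  have "Rot T h F (Xinf T h \<tau> F) = Rot_graph T h \<tau> F P p"
    using Rot_Xinf_subset_Rot_graph Rot_graph_subset_Rot_Xinf unfolding Rot_def Rot_graph_def by blast
  then show ?thesis using loop_rot_periodic_point Jpath_rot_periodic_point by blast
qed

end
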